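(* Let $G$ be a continuous subgroup of the affine group $\mathcal G$ (with the topology inherited from $\mathcal G\cong(0,\infty)\times\mathbb R$) with a strongly continuous unitary representation $G\ni g\mapsto U_g$, and let $\dot A$ be a $G$-invariant closed densely defined symmetric operator with finite deficiency indices. Then the map $(g,V)\mapsto\Gamma_g(V)$ from $G\times\mathcal V$ to $\mathcal V$ is continuous. In particular, if $G=\{g_t\}_{t\in\mathbb R}$ is a continuous one-parameter subgroup of $\mathcal G$, then for every $V\in\mathcal V$ the trajectory $\mathbb R\ni t\mapsto\Gamma_{g_t}(V)$ is continuous.
   Context: $\mathcal G$ is the group of affine maps $g(x)=ax+b$ of $\mathbb R$ with $a>0$; for an operator $A$, $g(A)=aA+bI$. A densely defined closed operator $A$ is $G$-invariant (with respect to $g\mapsto U_g$) if $U_g(\mathrm{Dom}(A))=\mathrm{Dom}(A)$ and $U_gAU_g^*f=aAf+bf$ for all $f\in\mathrm{Dom}(A)$, $g\in G$. Let $\mathcal N_\pm=\ker((\dot A)^*\mp iI)$ and let $\mathcal V$ be the set of contractions from $\mathcal N_+$ to $\mathcal N_-$ (with the norm topology). Every $V\in\mathcal V$ determines the maximal dissipative extension $A$ of $\dot A$ given by restricting $(\dot A)^*$ to $\mathrm{Dom}(\dot A)\dotplus(I-V)\mathcal N_+$, and every maximal dissipative $A$ with $\dot A\subset A\subset(\dot A)^*$ arises from a unique such $V$. For $g\in G$, the restriction $A_g$ of $(\dot A)^*$ to $U_g(\mathrm{Dom}(A))$ is again a maximal dissipative extension of $\dot A$, and $\Gamma_g(V)\in\mathcal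 V$ is the unique contraction with $\mathrm{Dom}(A_g)=\mathrm{Dom}(\dot A)\dotplus(I-\Gamma_g(V))\mathcal N_+$. *)

theory Defs
  imports "HOL-Analysis.Analysis"
begin

text \<open>The distribution has no complex inner product spaces, so we introduce them as a
type class: a real Banach space carrying a compatible complex scalar multiplication
and a complex inner product (antilinear in the first argument) inducing the norm.\<close>

class chilbert = real_normed_vector + complete_space +
  fixes hs_scaleC :: "complex \<Rightarrow> 'a \<Rightarrow> 'a"
    and hs_inner :: "'a \<Rightarrow> 'a \<Rightarrow> complex"
  assumes hs_scaleC_add_right: "hs_scaleC c (x + y) = hs_scaleC c x + hs_scaleC c y"
    and hs_scaleC_add_left: "hs_scaleC (c + d) x = hs_scaleC c x + hs_scaleC d x"
    and hs_scaleC_scaleC: "hs_scaleC c (hs_scaleC d x) = hs_scaleC (c * d) x"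
    and hs_scaleC_one: "hs_scaleC 1 x = x"
    and hs_scaleR_scaleC: "scaleR r x = hs_scaleC (complex_of_real r) x"
    and hs_inner_add_left: "hs_inner (x + y) z = hs_inner x z + hs_inner y z"
    and hs_inner_scaleC_left: "hs_inner (hs_scaleC c x) y = cnj c * hs_inner x y"
    and hs_inner_commute: "hs_inner x y = cnj (hs_inner y x)"
    and hs_norm_inner: "complex_of_real ((norm x)\<^sup>2) = hs_inner x x"

definition csubspace :: "'a::chilbert set \<Rightarrow> bool" where
  "csubspace S \<longleftrightarrow> 0 \<in> S \<and> (\<forall>x\<in>S. \<forall>y\<in>S. x + y \<in> S) \<and> (\<forall>c. \<forall>x\<in>S. hs_scaleC c x \<in> S)"

definition clinear_on :: "'a::chilbert set \<Rightarrow> ('a \<Rightarrow> 'a) \<Rightarrow> bool" where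
  "clinear_on D A \<longleftrightarrow> (\<forall>x\<in>D. \<forall>y\<in>D. A (x + y) = A x + A y) \<and>
     (\<forall>c. \<forall>x\<in>D. A (hs_scaleC c x) = hs_scaleC c (A x))"

definition cspan :: "'a::chilbert set \<Rightarrow> 'a set" where
  "cspan S = {(\<Sum>x\<in>F. hs_scaleC (c x) x) | F c. finite F \<and> F \<subseteq> S}"

definition finite_dim :: "'a::chilbert set \<Rightarrow> bool" where
  "finite_dim S \<longleftrightarrow> (\<exists>F. finite F \<and> F \<subseteq> S \<and> S \<subseteq> cspan F)"

section \<open>(Unbounded) operators, given by a domain D and an action A on D\<close>

definition lin_op :: "'a::chilbert set \<Rightarrow> ('a \<Rightarrow> 'a) \<Rightarrow> bool" where
  "lin_op D A \<longleftrightarrow> csubspace D \<and> clinear_on D A"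

definition densely_defined :: "'a::chilbert set \<Rightarrow> bool" where
  "densely_defined D \<longleftrightarrow> closure D = UNIV"

definition closed_op :: "'a::chilbert set \<Rightarrow> ('a \<Rightarrow> 'a) \<Rightarrow> bool" where
  "closed_op D A \<longleftrightarrow> closed {(x, A x) | x. x \<in> D}"

definition symmetric_op :: "'a::chilbert set \<Rightarrow> ('a \<Rightarrow> 'a) \<Rightarrow> bool" where
  "symmetric_op D A \<longleftrightarrow> (\<forall>x\<in>D. \<forall>y\<in>D. hs_inner (A x) y = hs_inner x (A y))"

definition adj_dom :: "'a::chilbert set \<Rightarrow> ('a \<Rightarrow> 'a) \<Rightarrow> 'a set" where
  "adj_dom D A = {y. \<exists>z. \<forall>x\<in>D. hs_inner (A x) y = hs_inner x z}"

definition adj :: "'a::chilbert set \<Rightarrow> ('a \<Rightarrow> 'a) \<Rightarrow> 'a \<Rightarrow> 'a" where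
  "adj D A y = (THE z. \<forall>x\<in>D. hs_inner (A x) y = hs_inner x z)"

text \<open>Deficiency subspaces: N+ = ker(A* - iI) (s = 1), N- = ker(A* + iI) (s = -1).\<close>

definition deficiency :: "'a::chilbert set \<Rightarrow> ('a \<Rightarrow> 'a) \<Rightarrow> complex \<Rightarrow> 'a set" where
  "deficiency D A s = {y \<in> adj_dom D A. adj D A y = hs_scaleC (s * \<i>) y}"

abbreviation Nplus where "Nplus D A \<equiv> deficiency D A 1"
abbreviation Nminus where "Nminus D A \<equiv> deficiency D A (-1)"

text \<open>The set V of contractions N+ \<rightarrow> N-. Each contraction is represented canonically by
the function which agrees with it on N+ and vanishes outside N+.\<close>

definition contractions :: "'a::chilbert set \<Rightarrow> ('a \<Rightarrow> 'a) \<Rightarrow> ('a \<Rightarrow> 'a) set" where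
  "contractions D A = {V. clinear_on (Nplus D A) V \<and> V ` Nplus D A \<subseteq> Nminus D A \<and>
      (\<forall>f\<in>Nplus D A. norm (V f) \<le> norm f) \<and> (\<forall>f. f \<notin> Nplus D A \<longrightarrow> V f = 0)}"

definition opdist :: "'a::chilbert set \<Rightarrow> ('a \<Rightarrow> 'a) \<Rightarrow> ('a \<Rightarrow> 'a) \<Rightarrow> ('a \<Rightarrow> 'a) \<Rightarrow> real" where
  "opdist D A V W = (SUP f\<in>{f \<in> Nplus D A. norm f \<le> 1}. norm (V f - W f))"

text \<open>Domain of the maximal dissipative extension determined by V:
Dom(A dot) + (I - V) N+.\<close>

definition ext_dom :: "'a::chilbert set \<Rightarrow> ('a \<Rightarrow> 'a) \<Rightarrow> ('a \<Rightarrow> 'a) \<Rightarrow> 'a set" where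
  "ext_dom D A V = {x + (f - V f) | x f. x \<in> D \<and> f \<in> Nplus D A}"

section \<open>The affine group: g(x) = a x + b is encoded as the pair (a, b) with a > 0\<close>

definition affgrp :: "(real \<times> real) set" where
  "affgrp = {g. fst g > 0}"

definition gmult :: "real \<times> real \<Rightarrow> real \<times> real \<Rightarrow> real \<times> real" where
  "gmult g h = (fst g * fst h, fst g * snd h + snd g)"

definition ginv :: "real \<times> real \<Rightarrow> real \<times> real" where
  "ginv g = (1 / fst g, - snd g / fst g)"

definition aff_subgroup :: "(real \<times> real) set \<Rightarrow> bool" where
  "aff_subgroup G \<longleftrightarrow> G \<subseteq> affgrp \<and> (1, 0) \<in> G \<and>
     (\<forall>g\<in>G. \<forall>h\<in>G. gmult g h \<in> G) \<and> (\<forall>g\<in>G. ginv g \<in> G)"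

definition unitary :: "('a::chilbert \<Rightarrow> 'a) \<Rightarrow> bool" where
  "unitary U \<longleftrightarrow> clinear_on UNIV U \<and> bij U \<and> (\<forall>x. norm (U x) = norm x)"

definition strongly_cont_unitary_rep ::
    "(real \<times> real) set \<Rightarrow> (real \<times> real \<Rightarrow> 'a::chilbert \<Rightarrow> 'a) \<Rightarrow> bool" where
  "strongly_cont_unitary_rep G U \<longleftrightarrow>
     (\<forall>g\<in>G. unitary (U g)) \<and> U (1, 0) = id \<and>
     (\<forall>g\<in>G. \<forall>h\<in>G. U (gmult g h) = U g \<circ> U h) \<and>
     (\<forall>f. continuous_on G (\<lambda>g. U g f))"

definition G_invariant ::
    "(real \<times> real) set \<Rightarrow> (real \<times> real \<Rightarrow> 'a::chilbert \<Rightarrow> 'a) \<Rightarrow> 'a set \<Rightarrow> ('a \<Rightarrow> 'a) \<Rightarrow> bool" where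
  "G_invariant G U D A \<longleftrightarrow> (\<forall>g\<in>G. U g ` D = D \<and>
     (\<forall>f\<in>D. U g (A (inv (U g) f)) = scaleR (fst g) (A f) + scaleR (snd g) f))"

definition Gamma ::
    "(real \<times> real \<Rightarrow> 'a::chilbert \<Rightarrow> 'a) \<Rightarrow> 'a set \<Rightarrow> ('a \<Rightarrow> 'a) \<Rightarrow> real \<times> real \<Rightarrow> ('a \<Rightarrow> 'a) \<Rightarrow> ('a \<Rightarrow> 'a)" where
  "Gamma U D A g V = (THE W. W \<in> contractions D A \<and> U g ` ext_dom D A V = ext_dom D A W)"

end

(*
  By von Neumann's formulas every h in the domain of A* splits uniquely as h = x + h+ + h- with
  x in Dom(A) and h+, h- in N+, N-, and Im <A* h, h> = |h-|^2 - |h+|^2; the extension given by a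
  contraction V has domain {x + f - V f}. Invariance gives A* U_g = U_g (A* - b) / a, so U_g
  multiplies the boundary form by 1/a > 0: it maps x + f - V f to x' + L f - M f with
  |M f| <= |L f|, where L : N+ -> N+ and M : N+ -> N- are linear maps built from U_g, the finite
  rank projections onto N+ and N-, and coefficients depending continuously on (a, b). Hence
  Gamma_g(V) is the contraction L f |-> M f (L is onto, since the construction for g^-1 undoes it).
  As L is also bounded below, comparing L and M for (g, V) and (g0, V0) on finite orthonormal
  bases bounds |Gamma_g(V) - Gamma_g0(V0)| by a quantity that is continuous in (g, |V - V0|) and
  vanishes at (g0, 0); strong continuity of U is needed only on these finitely many basis vectors.
*)

theory Submission
  imports Defs
begin

notation hs_scaleC (infixr "*\<^sub>C" 75)

lemma hs_scaleC_zero_right [simp]: "c *\<^sub>C (0::'a::chilbert) = 0"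
  using hs_scaleC_add_right[of c "0::'a" 0] by simp

lemma hs_scaleC_zero_left [simp]: "0 *\<^sub>C (x::'a::chilbert) = 0"
  using hs_scaleC_add_left[of 0 0 x] by simp

lemma hs_scaleC_minus_right: "c *\<^sub>C (- (x::'a::chilbert)) = - (c *\<^sub>C x)"
  using hs_scaleC_add_right[of c x "-x"] by (simp add: eq_neg_iff_add_eq_0 add.commute)

lemma hs_scaleC_minus_left: "(- c) *\<^sub>C (x::'a::chilbert) = - (c *\<^sub>C x)"
  using hs_scaleC_add_left[of c "-c" x] by (simp add: eq_neg_iff_add_eq_0 add.commute hs_scaleC_one)

lemma hs_scaleC_diff_right: "c *\<^sub>C ((x::'a::chilbert) - y) = c *\<^sub>C x - c *\<^sub>C y"
  using hs_scaleC_add_right[of c x "-y"] by (simp add: hs_scaleC_minus_right)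

lemma hs_scaleC_diff_left: "(c - d) *\<^sub>C (x::'a::chilbert) = c *\<^sub>C x - d *\<^sub>C x"
  using hs_scaleC_add_left[of c "-d" x] by (simp add: hs_scaleC_minus_left)

lemma hs_scaleC_add_self: "c *\<^sub>C x + c *\<^sub>C x = (2 * c) *\<^sub>C (x::'a::chilbert)"
  by (metis hs_scaleC_add_left mult_2)

lemma hs_scaleC_sum_right: "c *\<^sub>C (\<Sum>i\<in>F. f i) = (\<Sum>i\<in>F. c *\<^sub>C (f i :: 'a::chilbert))"
  by (induction F rule: infinite_finite_induct) (auto simp: hs_scaleC_add_right)

lemma hs_scaleC_of_real: "complex_of_real r *\<^sub>C (x::'a::chilbert) = r *\<^sub>R x"
  by (simp add: hs_scaleR_scaleC)

declare hs_scaleC_one [simp] hs_scaleC_scaleC [simp]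

lemma hs_inner_add_right: "hs_inner (z::'a::chilbert) (x + y) = hs_inner z x + hs_inner z y"
  by (metis hs_inner_commute hs_inner_add_left complex_cnj_add)

lemma hs_inner_scaleC_right: "hs_inner (x::'a::chilbert) (c *\<^sub>C y) = c * hs_inner x y"
  by (metis hs_inner_commute hs_inner_scaleC_left complex_cnj_mult complex_cnj_cnj)

lemma hs_inner_zero_left [simp]: "hs_inner (0::'a::chilbert) y = 0"
  using hs_inner_add_left[of "0::'a" 0 y] by simp

lemma hs_inner_zero_right [simp]: "hs_inner (y::'a::chilbert) 0 = 0"
  using hs_inner_add_right[of y "0::'a" 0] by simp

lemma hs_inner_minus_left: "hs_inner (- (x::'a::chilbert)) y = - hs_inner x y"
  using hs_inner_add_left[of x "-x" y] by (simp add: eq_neg_iff_add_eq_0 add.commute)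

lemma hs_inner_minus_right: "hs_inner (y::'a::chilbert) (- x) = - hs_inner y x"
  using hs_inner_add_right[of y x "-x"] by (simp add: eq_neg_iff_add_eq_0 add.commute)

lemma hs_inner_diff_left: "hs_inner ((x::'a::chilbert) - z) y = hs_inner x y - hs_inner z y"
  using hs_inner_add_left[of x "-z" y] by (simp add: hs_inner_minus_left)

lemma hs_inner_diff_right: "hs_inner (y::'a::chilbert) (x - z) = hs_inner y x - hs_inner y z"
  using hs_inner_add_right[of y x "-z"] by (simp add: hs_inner_minus_right)

lemma hs_inner_sum_left: "hs_inner (\<Sum>i\<in>F. f i) (y::'a::chilbert) = (\<Sum>i\<in>F. hs_inner (f i) y)"
  by (induction F rule: infinite_finite_induct) (auto simp: hs_inner_add_left)

lemma hs_inner_sum_right: "hs_inner (y::'a::chilbert) (\<Sum>i\<in>F. f i) = (\<Sum>i\<in>F. hs_inner y (f i))"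
  by (induction F rule: infinite_finite_induct) (auto simp: hs_inner_add_right)

lemma hs_inner_scaleR_left: "hs_inner (r *\<^sub>R x) y = complex_of_real r * hs_inner x (y::'a::chilbert)"
  by (simp add: hs_scaleC_of_real[symmetric] hs_inner_scaleC_left)

lemma hs_inner_scaleR_right: "hs_inner x (r *\<^sub>R y) = complex_of_real r * hs_inner x (y::'a::chilbert)"
  by (simp add: hs_scaleC_of_real[symmetric] hs_inner_scaleC_right)

lemmas hs_inner_simps = hs_inner_add_left hs_inner_add_right hs_inner_diff_left hs_inner_diff_right
  hs_inner_scaleC_left hs_inner_scaleC_right hs_inner_minus_left hs_inner_minus_right

lemma hs_inner_self: "hs_inner (x::'a::chilbert) x = complex_of_real ((norm x)\<^sup>2)"
  by (rule hs_norm_inner[symmetric])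

lemma Re_hs_inner_self: "Re (hs_inner (x::'a::chilbert) x) = (norm x)\<^sup>2"
  by (simp add: hs_inner_self)

lemma hs_inner_self_eq_zero: "hs_inner (x::'a::chilbert) x = 0 \<longleftrightarrow> x = 0"
  by (simp add: hs_inner_self)

lemma hs_inner_eq_zero_commute: "hs_inner (x::'a::chilbert) y = 0 \<longleftrightarrow> hs_inner y x = 0"
  by (metis hs_inner_commute complex_cnj_zero)

lemma norm_hs_scaleC: "norm (c *\<^sub>C (x::'a::chilbert)) = cmod c * norm x"
proof -
  have "complex_of_real ((norm (c *\<^sub>C x))\<^sup>2) = cnj c * c * hs_inner x x"
    unfolding hs_norm_inner by (simp add: hs_inner_scaleC_left hs_inner_scaleC_right)
  also have "\<dots> = complex_of_real ((cmod c * norm x)\<^sup>2)"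
    using complex_norm_square[of c] by (simp add: hs_inner_self power_mult_distrib mult.commute)
  finally have "(norm (c *\<^sub>C x))\<^sup>2 = (cmod c * norm x)\<^sup>2" using of_real_eq_iff by blast
  then show ?thesis by (simp add: power2_eq_iff_nonneg)
qed

lemma norm_add_square: "(norm ((x::'a::chilbert) + y))\<^sup>2 = (norm x)\<^sup>2 + (norm y)\<^sup>2 + 2 * Re (hs_inner x y)"
proof -
  have "(norm (x + y))\<^sup>2 = Re (hs_inner (x + y) (x + y))" by (simp add: Re_hs_inner_self)
  also have "\<dots> = (norm x)\<^sup>2 + (norm y)\<^sup>2 + Re (hs_inner x y) + Re (hs_inner y x)"
    by (simp add: hs_inner_add_left hs_inner_add_right Re_hs_inner_self)
  finally show ?thesis using hs_inner_commute[of y x] by simp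
qed

lemma norm_diff_square: "(norm ((x::'a::chilbert) - y))\<^sup>2 = (norm x)\<^sup>2 + (norm y)\<^sup>2 - 2 * Re (hs_inner x y)"
  using norm_add_square[of x "-y"] by (simp add: hs_inner_minus_right)

lemma hs_Cauchy_Schwarz: "cmod (hs_inner (x::'a::chilbert) y) \<le> norm x * norm y"
proof (cases "x = 0")
  case True then show ?thesis by simp
next
  case False
  define t where "t = hs_inner x y / complex_of_real ((norm x)\<^sup>2)"
  have nx: "norm x > 0" using False by simp
  have "0 \<le> (norm (y - t *\<^sub>C x))\<^sup>2" by simp
  also have "\<dots> = (norm y)\<^sup>2 + (cmod t * norm x)\<^sup>2 - 2 * Re (hs_inner y (t *\<^sub>C x))"
    by (simp add: norm_diff_square norm_hs_scaleC)
  also have "hs_inner y (t *\<^sub>C x) = t * cnj (hs_inner x y)"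
    by (simp add: hs_inner_scaleC_right hs_inner_commute[of y])
  also have "Re (t * cnj (hs_inner x y)) = (cmod (hs_inner x y))\<^sup>2 / (norm x)\<^sup>2"
    unfolding t_def by (simp add: complex_norm_square[symmetric] Re_divide_of_real)
  also have "cmod t = cmod (hs_inner x y) / (norm x)\<^sup>2"
    unfolding t_def by (simp add: norm_divide norm_power)
  finally have "0 \<le> (norm y)\<^sup>2 - (cmod (hs_inner x y))\<^sup>2 / (norm x)\<^sup>2"
    using nx by (simp add: power_divide power2_eq_square field_simps)
  then have "(cmod (hs_inner x y))\<^sup>2 \<le> (norm x * norm y)\<^sup>2"
    using nx by (simp add: field_simps power_mult_distrib)
  then show ?thesis by (simp add: power2_le_iff_abs_le)
qed

lemma orthogonal_to_dense_eq_zero: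
  assumes "closure S = UNIV" and "\<forall>x\<in>S. hs_inner x (w::'a::chilbert) = 0"
  shows "w = 0"
proof (rule ccontr)
  assume "w \<noteq> 0"
  then have nw: "norm w > 0" by simp
  obtain x where x: "x \<in> S" "dist x w < norm w"
    using assms(1) nw closure_approachable by blast
  have "(norm w)\<^sup>2 = cmod (hs_inner (w - x) w)"
    using assms(2) x by (simp add: hs_inner_diff_left hs_inner_self norm_power)
  also have "\<dots> \<le> norm (w - x) * norm w" by (rule hs_Cauchy_Schwarz)
  also have "\<dots> < norm w * norm w" using x nw by (simp add: dist_norm norm_minus_commute)
  finally show False by (simp add: power2_eq_square)
qed

lemma tendsto_hs_scaleC:
  assumes "X \<longlonglongrightarrow> x"
  shows "(\<lambda>n. c *\<^sub>C (X n :: 'a::chilbert)) \<longlonglongrightarrow> c *\<^sub>C x"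
proof -
  have "(\<lambda>n. norm (X n - x)) \<longlonglongrightarrow> 0"
    using assms by (simp add: tendsto_norm_zero_iff LIM_zero)
  then have "(\<lambda>n. cmod c * norm (X n - x)) \<longlonglongrightarrow> 0"
    by (simp add: tendsto_mult_right_zero)
  then have "(\<lambda>n. norm (c *\<^sub>C X n - c *\<^sub>C x)) \<longlonglongrightarrow> 0"
    by (simp add: norm_hs_scaleC hs_scaleC_diff_right[symmetric])
  then show ?thesis by (simp add: tendsto_norm_zero_iff LIM_zero_cancel)
qed

lemma unitary_hs_inner:
  assumes "unitary U"
  shows "hs_inner (U x) (U y) = hs_inner x (y::'a::chilbert)"
proof -
  have lin: "U (x + y) = U x + U y" "U (c *\<^sub>C x) = c *\<^sub>C U x" for x y c
    using assms by (simp_all add: unitary_def clinear_on_def)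
  have norm: "norm (U z) = norm z" for z using assms by (simp add: unitary_def)
  have Re: "Re (hs_inner (U x) (U y)) = Re (hs_inner x y)" for x y
    using norm_add_square[of "U x" "U y"] norm_add_square[of x y] by (simp add: norm lin(1)[symmetric])
  have "Im (hs_inner (U x) (U y)) = Im (hs_inner x y)"
    using Re[of x "(-\<i>) *\<^sub>C y"] by (simp add: lin(2) hs_inner_scaleC_right)
  then show ?thesis using Re[of x y] by (simp add: complex_eq_iff)
qed

lemma norm_lincomb_le:
  "norm v \<le> norm f \<Longrightarrow> norm (c1 *\<^sub>C f + c2 *\<^sub>C v) \<le> (cmod c1 + cmod c2) * norm (f::'a::chilbert)"
  using norm_triangle_ineq[of "c1 *\<^sub>C f" "c2 *\<^sub>C v"] mult_left_mono[of "norm v" "norm f" "cmod c2"]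
  by (simp add: norm_hs_scaleC distrib_right)

lemma csubspace_zero: "csubspace S \<Longrightarrow> 0 \<in> S"
  by (simp add: csubspace_def)

lemma csubspace_add: "csubspace S \<Longrightarrow> x \<in> S \<Longrightarrow> y \<in> S \<Longrightarrow> x + y \<in> S"
  by (simp add: csubspace_def)

lemma csubspace_scaleC: "csubspace S \<Longrightarrow> x \<in> S \<Longrightarrow> c *\<^sub>C x \<in> S"
  by (simp add: csubspace_def)

lemma csubspace_minus: "csubspace S \<Longrightarrow> x \<in> S \<Longrightarrow> - x \<in> S"
  using csubspace_scaleC[of S x "-1"] by (simp add: hs_scaleC_minus_left)

lemma csubspace_diff: "csubspace S \<Longrightarrow> x \<in> S \<Longrightarrow> y \<in> S \<Longrightarrow> x - y \<in> S"
  using csubspace_add[of S x "-y"] csubspace_minus by fastforce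

lemma csubspace_scaleR: "csubspace S \<Longrightarrow> x \<in> S \<Longrightarrow> r *\<^sub>R x \<in> S"
  using csubspace_scaleC[of S x "complex_of_real r"] by (simp add: hs_scaleC_of_real)

lemma csubspace_sum: "csubspace S \<Longrightarrow> (\<And>i. i \<in> F \<Longrightarrow> f i \<in> S) \<Longrightarrow> sum f F \<in> S"
  by (induction F rule: infinite_finite_induct) (auto simp: csubspace_zero csubspace_add)

lemma csubspace_cspan: "csubspace (cspan S)"
  unfolding csubspace_def
proof (intro conjI ballI allI)
  show "0 \<in> cspan S" unfolding cspan_def by (rule CollectI, rule exI[of _ "{}"]) auto
next
  fix x y assume "x \<in> cspan S" "y \<in> cspan S"
  then obtain F c G d where F: "finite F" "F \<subseteq> S" "x = (\<Sum>v\<in>F. c v *\<^sub>C v)"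
    and G: "finite G" "G \<subseteq> S" "y = (\<Sum>v\<in>G. d v *\<^sub>C v)" unfolding cspan_def by blast
  define e where "e v = (if v \<in> F then c v else 0) + (if v \<in> G then d v else 0)" for v
  have "x = (\<Sum>v\<in>F\<union>G. (if v \<in> F then c v else 0) *\<^sub>C v)"
    unfolding F(3) by (rule sum.mono_neutral_cong_left) (use F G in auto)
  moreover have "y = (\<Sum>v\<in>F\<union>G. (if v \<in> G then d v else 0) *\<^sub>C v)"
    unfolding G(3) by (rule sum.mono_neutral_cong_left) (use F G in auto)
  ultimately have "x + y = (\<Sum>v\<in>F\<union>G. e v *\<^sub>C v)"
    by (simp add: e_def hs_scaleC_add_left sum.distrib)
  then show "x + y \<in> cspan S" unfolding cspan_def using F G by blast
next
  fix a x assume "x \<in> cspan S"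
  then obtain F c where F: "finite F" "F \<subseteq> S" "x = (\<Sum>v\<in>F. c v *\<^sub>C v)" unfolding cspan_def by blast
  then have "a *\<^sub>C x = (\<Sum>v\<in>F. (a * c v) *\<^sub>C v)" by (simp add: hs_scaleC_sum_right)
  then show "a *\<^sub>C x \<in> cspan S" unfolding cspan_def
    by (intro CollectI exI[of _ F] exI[of _ "\<lambda>v. a * c v"]) (use F in auto)
qed

lemma cspan_superset: "x \<in> S \<Longrightarrow> x \<in> cspan S"
  unfolding cspan_def by (rule CollectI, rule exI[of _ "{x}"], rule exI[of _ "\<lambda>_. 1"]) auto

lemma cspan_minimal: "csubspace T \<Longrightarrow> S \<subseteq> T \<Longrightarrow> cspan S \<subseteq> T"
  unfolding cspan_def by (auto intro!: csubspace_sum csubspace_scaleC)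

lemma cspan_mono: "S \<subseteq> T \<Longrightarrow> cspan S \<subseteq> cspan T"
  by (meson csubspace_cspan cspan_minimal cspan_superset order.trans subsetI)


lemma clinear_on_diff:
  assumes "csubspace S" "clinear_on S L" "x \<in> S" "y \<in> S"
  shows "L (x - y) = L x - L (y::'a::chilbert)"
proof -
  have "L (x + (-1) *\<^sub>C y) = L x + (-1) *\<^sub>C L y"
    using assms csubspace_scaleC[OF assms(1) assms(4)] by (simp add: clinear_on_def)
  then show ?thesis by (simp add: hs_scaleC_minus_left)
qed

lemma dominated_clinear_factors:
  assumes S: "csubspace S" and L: "clinear_on S L" and M: "clinear_on S M"
    and le: "\<And>f. f \<in> S \<Longrightarrow> norm (M f) \<le> norm (L f)"
    and f: "f \<in> S" "f' \<in> S" and eq: "L f = L f'"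
  shows "M f = M (f'::'a::chilbert)"
proof -
  have "L (f - f') = 0" using eq clinear_on_diff[OF S L f] by simp
  then have "M (f - f') = 0" using le[OF csubspace_diff[OF S f]] by simp
  then show ?thesis using clinear_on_diff[OF S M f] by simp
qed

lemma csubspace_image:
  assumes S: "csubspace S" and L: "clinear_on S L"
  shows "csubspace (L ` (S::'a::chilbert set))"
  unfolding csubspace_def
proof (intro conjI ballI allI)
  have "L 0 = 0" using L csubspace_zero[OF S] hs_scaleC_zero_left[of 0] unfolding clinear_on_def
    by (metis hs_scaleC_zero_left)
  then show "0 \<in> L ` S" using csubspace_zero[OF S] by (metis image_eqI)
next
  fix u v assume "u \<in> L ` S" "v \<in> L ` S"
  then obtain x y where "x \<in> S" "y \<in> S" "u = L x" "v = L y" by blast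
  then show "u + v \<in> L ` S" using L csubspace_add[OF S] unfolding clinear_on_def by (metis image_eqI)
next
  fix c u assume "u \<in> L ` S"
  then obtain x where "x \<in> S" "u = L x" by blast
  then show "c *\<^sub>C u \<in> L ` S" using L csubspace_scaleC[OF S] unfolding clinear_on_def by (metis image_eqI)
qed

lemma csubspace_preimage:
  assumes S: "csubspace S" and L: "clinear_on S L" and T: "csubspace T"
  shows "csubspace {x \<in> (S::'a::chilbert set). L x \<in> T}"
  unfolding csubspace_def
proof (intro conjI ballI allI)
  have "L 0 = 0" using L csubspace_zero[OF S] unfolding clinear_on_def by (metis hs_scaleC_zero_left)
  then show "0 \<in> {x \<in> S. L x \<in> T}" using csubspace_zero[OF S] csubspace_zero[OF T] by simp
next
  fix x y assume "x \<in> {x \<in> S. L x \<in> T}" "y \<in> {x \<in> S. L x \<in> T}"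
  then show "x + y \<in> {x \<in> S. L x \<in> T}"
    using L csubspace_add[OF S] csubspace_add[OF T] unfolding clinear_on_def by simp
next
  fix c x assume "x \<in> {x \<in> S. L x \<in> T}"
  then show "c *\<^sub>C x \<in> {x \<in> S. L x \<in> T}"
    using L csubspace_scaleC[OF S] csubspace_scaleC[OF T] unfolding clinear_on_def by simp
qed

lemma image_cspan:
  assumes "clinear_on (cspan E) L"
  shows "L ` cspan E = cspan (L ` (E::'a::chilbert set))"
proof
  show "cspan (L ` E) \<subseteq> L ` cspan E"
    by (rule cspan_minimal[OF csubspace_image[OF csubspace_cspan assms]]) (auto intro: cspan_superset)
  have "cspan E \<subseteq> {x \<in> cspan E. L x \<in> cspan (L ` E)}"
    by (rule cspan_minimal[OF csubspace_preimage[OF csubspace_cspan assms csubspace_cspan]])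
      (auto intro: cspan_superset)
  then show "L ` cspan E \<subseteq> cspan (L ` E)" by blast
qed

section \<open>Finite orthonormal systems\<close>

definition orthonormal :: "'a::chilbert set \<Rightarrow> bool" where
  "orthonormal E \<longleftrightarrow> (\<forall>e\<in>E. norm e = 1) \<and> (\<forall>e\<in>E. \<forall>e'\<in>E. e \<noteq> e' \<longrightarrow> hs_inner e e' = 0)"

definition proj :: "'a::chilbert set \<Rightarrow> 'a \<Rightarrow> 'a" where
  "proj E w = (\<Sum>e\<in>E. hs_inner e w *\<^sub>C e)"

lemma hs_inner_proj:
  assumes "finite E" "orthonormal E" "e \<in> E"
  shows "hs_inner e (proj E w) = hs_inner e w"
proof -
  have "hs_inner e (proj E w) = (\<Sum>e'\<in>E. hs_inner e' w * hs_inner e e')"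
    by (simp add: proj_def hs_inner_sum_right hs_inner_scaleC_right)
  also have "\<dots> = (\<Sum>e'\<in>{e}. hs_inner e' w * hs_inner e e')"
    by (rule sum.mono_neutral_right) (use assms in \<open>auto simp: orthonormal_def\<close>)
  also have "\<dots> = hs_inner e w" using assms by (simp add: orthonormal_def hs_inner_self)
  finally show ?thesis .
qed

lemma proj_in_cspan: "proj E w \<in> cspan E"
  unfolding proj_def
  by (intro csubspace_sum[OF csubspace_cspan] csubspace_scaleC[OF csubspace_cspan] cspan_superset)

lemma orthogonal_cspan:
  assumes "\<forall>e\<in>E. hs_inner e u = 0" "y \<in> cspan E"
  shows "hs_inner y u = 0"
  using assms unfolding cspan_def by (auto simp: hs_inner_sum_left hs_inner_scaleC_left subset_iff)

lemma orthogonal_proj_residual: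
  assumes "finite E" "orthonormal E" "y \<in> cspan E"
  shows "hs_inner y (w - proj E w) = 0"
  using orthogonal_cspan[of E "w - proj E w" y, OF _ assms(3)] hs_inner_proj[OF assms(1,2)]
  by (simp add: hs_inner_diff_right)

lemma proj_cspan_id:
  assumes "finite E" "orthonormal E" "y \<in> cspan E"
  shows "proj E y = y"
proof -
  have "y - proj E y \<in> cspan E" by (rule csubspace_diff[OF csubspace_cspan assms(3) proj_in_cspan])
  then have "hs_inner (y - proj E y) (y - proj E y) = 0"
    by (rule orthogonal_proj_residual[OF assms(1,2)])
  then show ?thesis by (simp add: hs_inner_self_eq_zero)
qed

lemma norm_proj_le:
  assumes "finite E" "orthonormal E"
  shows "norm (proj E w) \<le> norm w"
proof -
  have "hs_inner (proj E w) (w - proj E w) = 0"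
    by (rule orthogonal_proj_residual[OF assms proj_in_cspan])
  then have "(norm w)\<^sup>2 = (norm (proj E w))\<^sup>2 + (norm (w - proj E w))\<^sup>2"
    using norm_add_square[of "proj E w" "w - proj E w"] by simp
  then show ?thesis by (metis le_add_same_cancel1 power2_le_imp_le zero_le_power2 norm_ge_zero)
qed

lemma proj_add: "proj E (x + y) = proj E x + proj E y"
  by (simp add: proj_def hs_inner_add_right hs_scaleC_add_left sum.distrib)

lemma proj_scaleC: "proj E (c *\<^sub>C x) = c *\<^sub>C proj E x"
  by (simp add: proj_def hs_inner_scaleC_right hs_scaleC_sum_right mult.commute)

lemma proj_diff: "proj E (x - y) = proj E x - proj E y"
  by (simp add: proj_def hs_inner_diff_right hs_scaleC_diff_left sum_subtractf)

lemma proj_orthogonal: "\<forall>e\<in>E. hs_inner e u = 0 \<Longrightarrow> proj E u = 0"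
  by (simp add: proj_def)

lemma Gram_Schmidt:
  assumes "finite F"
  shows "\<exists>E. finite E \<and> orthonormal E \<and> cspan E = cspan F"
  using assms
proof (induction F rule: finite_induct)
  case empty
  show ?case by (rule exI[of _ "{}"]) (auto simp: orthonormal_def)
next
  case (insert v F)
  then obtain E where E: "finite E" "orthonormal E" "cspan E = cspan F" by blast
  have span_E: "cspan E \<subseteq> cspan (insert v F)" unfolding E(3) by (rule cspan_mono) auto
  have F_E: "F \<subseteq> cspan E" unfolding E(3) by (auto intro: cspan_superset)
  define r where "r = v - proj E v"
  have r_span: "r \<in> cspan (insert v F)" unfolding r_def
    by (rule csubspace_diff[OF csubspace_cspan]) (use proj_in_cspan span_E in \<open>auto intro: cspan_superset\<close>)
  have r_orth: "\<forall>e\<in>E. hs_inner e r = 0"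
    unfolding r_def using orthogonal_proj_residual[OF E(1,2) cspan_superset] by blast
  show ?case
  proof (cases "r = 0")
    case True
    then have "v \<in> cspan E" using proj_in_cspan[of E v] by (simp add: r_def)
    then have "cspan (insert v F) \<subseteq> cspan E" using F_E by (intro cspan_minimal[OF csubspace_cspan]) auto
    then show ?thesis using E span_E by blast
  next
    case False
    define e0 where "e0 = complex_of_real (1 / norm r) *\<^sub>C r"
    have norm_e0: "norm e0 = 1" using False by (simp add: e0_def norm_hs_scaleC norm_divide)
    have e0_orth: "\<forall>e\<in>E. hs_inner e e0 = 0" using r_orth by (simp add: e0_def hs_inner_scaleC_right)
    have "orthonormal (insert e0 E)"
      using E(2) norm_e0 e0_orth hs_inner_eq_zero_commute unfolding orthonormal_def by auto
    moreover have "cspan (insert e0 E) = cspan (insert v F)"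
    proof
      have "e0 \<in> cspan (insert v F)" unfolding e0_def by (rule csubspace_scaleC[OF csubspace_cspan r_span])
      then show "cspan (insert e0 E) \<subseteq> cspan (insert v F)"
        using span_E by (intro cspan_minimal[OF csubspace_cspan]) (auto intro: cspan_superset)
      have sp: "cspan E \<subseteq> cspan (insert e0 E)" by (rule cspan_mono) auto
      have "v = complex_of_real (norm r) *\<^sub>C e0 + proj E v" using False by (simp add: e0_def r_def)
      also have "\<dots> \<in> cspan (insert e0 E)"
        by (rule csubspace_add[OF csubspace_cspan csubspace_scaleC[OF csubspace_cspan cspan_superset]])
          (use proj_in_cspan sp in auto)
      finally show "cspan (insert v F) \<subseteq> cspan (insert e0 E)"
        using F_E sp by (intro cspan_minimal[OF csubspace_cspan]) auto
    qed
    ultimately show ?thesis using E(1) by blast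
  qed
qed

lemma orthonormal_basis_exists:
  assumes "csubspace N" "finite_dim N"
  shows "\<exists>E. finite E \<and> orthonormal E \<and> cspan E = N"
proof -
  obtain F where F: "finite F" "F \<subseteq> N" "N \<subseteq> cspan F" using assms(2) by (auto simp: finite_dim_def)
  have "cspan F = N" using F cspan_minimal[OF assms(1) F(2)] by blast
  then show ?thesis using Gram_Schmidt[OF F(1)] by metis
qed

lemma clinear_on_UNIV_sum:
  assumes "clinear_on UNIV R"
  shows "R (\<Sum>i\<in>F. c i *\<^sub>C h i) = (\<Sum>i\<in>F. c i *\<^sub>C R (h i :: 'a::chilbert))"
proof (induction F rule: infinite_finite_induct)
  case (insert x F)
  then show ?case using assms by (simp add: clinear_on_def)
qed (use assms in \<open>auto simp: clinear_on_def dest: bspec[of _ _ 0] spec[of _ 0]\<close>)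

lemma norm_diff_le_on_cspan:
  assumes T: "clinear_on UNIV T" and S: "clinear_on UNIV S"
    and E: "finite E" "orthonormal E" and u: "u \<in> cspan E"
  shows "norm (T u - S u) \<le> (\<Sum>e\<in>E. norm (T e - S e)) * norm (u::'a::chilbert)"
proof -
  have "proj E u = u" by (rule proj_cspan_id[OF E u])
  then have "T u - S u = T (proj E u) - S (proj E u)" by simp
  also have "\<dots> = (\<Sum>e\<in>E. hs_inner e u *\<^sub>C (T e - S e))"
    unfolding proj_def clinear_on_UNIV_sum[OF T] clinear_on_UNIV_sum[OF S]
    by (simp add: sum_subtractf hs_scaleC_diff_right)
  also have "norm \<dots> \<le> (\<Sum>e\<in>E. norm (hs_inner e u *\<^sub>C (T e - S e)))" by (rule norm_sum)
  also have "\<dots> \<le> (\<Sum>e\<in>E. norm u * norm (T e - S e))"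
  proof (rule sum_mono)
    fix e assume "e \<in> E"
    then have "cmod (hs_inner e u) \<le> norm u"
      using hs_Cauchy_Schwarz[of e u] E(2) by (simp add: orthonormal_def)
    then show "norm (hs_inner e u *\<^sub>C (T e - S e)) \<le> norm u * norm (T e - S e)"
      by (simp add: norm_hs_scaleC mult_right_mono)
  qed
  also have "\<dots> = (\<Sum>e\<in>E. norm (T e - S e)) * norm u" by (simp add: sum_distrib_left mult.commute)
  finally show ?thesis .
qed

section \<open>Orthogonal projection onto a closed subspace\<close>

lemma Cauchy_dominated:
  assumes "Cauchy y" "\<And>n m. dist (x n) (x m) \<le> dist (y n) (y m)"
  shows "Cauchy x"
  unfolding Cauchy_def
proof (intro allI impI)
  fix e :: real assume "e > 0"
  then obtain M where "\<forall>m\<ge>M. \<forall>n\<ge>M. dist (y m) (y n) < e" using assms(1) unfolding Cauchy_def by blast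
  then show "\<exists>M. \<forall>m\<ge>M. \<forall>n\<ge>M. dist (x m) (x n) < e" using assms(2) le_less_trans by blast
qed

lemma minimizing_sequence_Cauchy:
  fixes R :: "'a::chilbert set"
  assumes R: "csubspace R" and s: "\<And>n. s n \<in> R"
    and d: "\<And>r. r \<in> R \<Longrightarrow> d \<le> norm (u - r)" and lim: "(\<lambda>n. norm (u - s n)) \<longlonglongrightarrow> d"
  shows "Cauchy s"
proof (rule metric_CauchyI)
  fix e :: real assume "e > 0"
  have "d \<ge> 0" by (rule LIMSEQ_le_const[OF lim]) simp
  have "(\<lambda>n. (norm (u - s n))\<^sup>2) \<longlonglongrightarrow> d\<^sup>2" by (intro tendsto_intros lim)
  then have "eventually (\<lambda>n. (norm (u - s n))\<^sup>2 < d\<^sup>2 + e\<^sup>2 / 4) sequentially"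
    by (rule order_tendstoD) (use \<open>e > 0\<close> in simp)
  then obtain M where M: "\<And>n. n \<ge> M \<Longrightarrow> (norm (u - s n))\<^sup>2 < d\<^sup>2 + e\<^sup>2 / 4"
    unfolding eventually_sequentially by blast
  show "\<exists>M. \<forall>m\<ge>M. \<forall>n\<ge>M. dist (s m) (s n) < e"
  proof (intro exI[of _ M] allI impI)
    fix m n assume mn: "m \<ge> M" "n \<ge> M"
    \<comment> \<open>parallelogram law with the midpoint, which is no closer to u than d\<close>
    have "(1/2) *\<^sub>R (s m + s n) \<in> R" using s R by (simp add: csubspace_scaleR csubspace_add)
    then have "d\<^sup>2 \<le> (norm (u - (1/2) *\<^sub>R (s m + s n)))\<^sup>2" using d \<open>d \<ge> 0\<close> by (simp add: power_mono)
    moreover have "(u - s m) + (u - s n) = 2 *\<^sub>R (u - (1/2) *\<^sub>R (s m + s n))"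
      by (simp add: algebra_simps scaleR_2)
    moreover have "(norm ((u - s m) + (u - s n)))\<^sup>2 + (norm (s n - s m))\<^sup>2
        = 2 * (norm (u - s m))\<^sup>2 + 2 * (norm (u - s n))\<^sup>2"
      using norm_add_square[of "u - s m" "u - s n"] norm_diff_square[of "u - s m" "u - s n"] by simp
    ultimately have "(norm (s n - s m))\<^sup>2 < e\<^sup>2"
      using M[OF mn(1)] M[OF mn(2)] by (simp add: power_mult_distrib)
    then show "dist (s m) (s n) < e"
      using \<open>e > 0\<close> by (simp add: dist_norm norm_minus_commute power_less_imp_less_base)
  qed
qed

lemma exists_nearest_point:
  fixes R :: "'a::chilbert set"
  assumes R: "csubspace R" "closed R"
  shows "\<exists>r\<in>R. \<forall>s\<in>R. norm (u - r) \<le> norm (u - s)"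
proof -
  define d where "d = Inf ((\<lambda>s. norm (u - s)) ` R)"
  have ne: "(\<lambda>s. norm (u - s)) ` R \<noteq> {}" using csubspace_zero[OF R(1)] by blast
  have bdd: "bdd_below ((\<lambda>s. norm (u - s)) ` R)" by (rule bdd_belowI[of _ 0]) auto
  have d_le: "d \<le> norm (u - s)" if "s \<in> R" for s
    unfolding d_def by (rule cInf_lower[OF _ bdd]) (use that in auto)
  have "\<exists>s\<in>R. norm (u - s) < d + 1 / (real n + 1)" for n
  proof -
    have "Inf ((\<lambda>s. norm (u - s)) ` R) < d + 1 / (real n + 1)" unfolding d_def by simp
    then show ?thesis using cInf_lessD[OF ne] by blast
  qed
  then obtain s where s: "\<And>n. s n \<in> R" "\<And>n. norm (u - s n) < d + 1 / (real n + 1)" by metis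
  have upper: "(\<lambda>n. d + 1 / (real n + 1)) \<longlonglongrightarrow> d + 0"
    by (intro tendsto_intros) (use LIMSEQ_inverse_real_of_nat in \<open>simp add: inverse_eq_divide add.commute\<close>)
  have lim: "(\<lambda>n. norm (u - s n)) \<longlonglongrightarrow> d"
  proof (rule real_tendsto_sandwich[of "\<lambda>_. d" _ _ "\<lambda>n. d + 1 / (real n + 1)"])
    show "\<forall>\<^sub>F n in sequentially. d \<le> norm (u - s n)" using d_le s(1) by simp
    show "\<forall>\<^sub>F n in sequentially. norm (u - s n) \<le> d + 1 / (real n + 1)" using s(2) by (simp add: less_imp_le)
  qed (use upper in simp_all)
  have "Cauchy s" by (rule minimizing_sequence_Cauchy[OF R(1) s(1) d_le lim])
  then obtain r where r: "s \<longlonglongrightarrow> r" unfolding Cauchy_convergent_iff convergent_def by blast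
  have "r \<in> R" using closed_sequentially[OF R(2) _ r] s(1) by blast
  moreover have "(\<lambda>n. norm (u - s n)) \<longlonglongrightarrow> norm (u - r)" by (intro tendsto_intros r)
  then have "norm (u - r) = d" by (rule LIMSEQ_unique[OF _ lim])
  ultimately show ?thesis using d_le by auto
qed

lemma nearest_point_orthogonal:
  fixes R :: "'a::chilbert set"
  assumes R: "csubspace R" and r: "r \<in> R" and near: "\<forall>s\<in>R. norm (u - r) \<le> norm (u - s)"
    and t: "t \<in> R"
  shows "hs_inner t (u - r) = 0"
proof (rule ccontr)
  define v where "v = u - r"
  define q where "q = hs_inner t v"
  assume "hs_inner t (u - r) \<noteq> 0"
  then have q0: "q \<noteq> 0" by (simp add: q_def v_def)
  \<comment> \<open>moving from r towards t by a small multiple k of q shortens the distance to u\<close>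
  define k where "k = 1 / ((norm t)\<^sup>2 + 1)"
  have k0: "k > 0" unfolding k_def by (smt (verit) divide_pos_pos zero_le_power2)
  have "r + (complex_of_real k * q) *\<^sub>C t \<in> R" using r t R by (simp add: csubspace_add csubspace_scaleC)
  then have "(norm v)\<^sup>2 \<le> (norm (v - (complex_of_real k * q) *\<^sub>C t))\<^sup>2"
    using near by (simp add: v_def diff_diff_add power_mono)
  also have "\<dots> = (norm v)\<^sup>2 + (k * cmod q * norm t)\<^sup>2 - 2 * Re (hs_inner v ((complex_of_real k * q) *\<^sub>C t))"
    using k0 by (simp add: norm_diff_square norm_hs_scaleC norm_mult)
  also have "Re (hs_inner v ((complex_of_real k * q) *\<^sub>C t)) = k * (cmod q)\<^sup>2"
  proof -
    have "hs_inner v ((complex_of_real k * q) *\<^sub>C t) = complex_of_real k * (q * cnj q)"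
      using hs_inner_commute[of v t] by (simp add: q_def hs_inner_scaleC_right)
    then show ?thesis by (simp add: complex_norm_square[symmetric])
  qed
  finally have "2 * k * (cmod q)\<^sup>2 \<le> k\<^sup>2 * (cmod q)\<^sup>2 * (norm t)\<^sup>2"
    by (simp add: power_mult_distrib)
  then have "2 \<le> k * (norm t)\<^sup>2" using q0 k0 by (simp add: power2_eq_square)
  moreover have "k * (norm t)\<^sup>2 < 1"
  proof -
    have "(norm t)\<^sup>2 + 1 > 0" by (smt (verit) zero_le_power2)
    then show ?thesis by (simp add: k_def pos_divide_less_eq)
  qed
  ultimately show False by simp
qed

lemma orthogonal_projection_exists:
  fixes R :: "'a::chilbert set"
  assumes "csubspace R" "closed R"
  shows "\<exists>r\<in>R. \<forall>s\<in>R. hs_inner s (u - r) = 0"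
  using exists_nearest_point[OF assms] nearest_point_orthogonal[OF assms(1)] by blast

section \<open>Symmetric operators with finite deficiency indices\<close>

locale symmetric_operator =
  fixes D :: "'a::chilbert set" and A :: "'a \<Rightarrow> 'a"
  assumes lin_op: "lin_op D A" and dense: "densely_defined D" and closed: "closed_op D A"
    and symmetric: "symmetric_op D A"
    and finite_Nplus: "finite_dim (Nplus D A)" and finite_Nminus: "finite_dim (Nminus D A)"
begin

abbreviation "Np \<equiv> Nplus D A"
abbreviation "Nm \<equiv> Nminus D A"

text \<open>\<open>adj_pair y z\<close> encodes y \<in> Dom(A*) with A* y = z.\<close>

definition adj_pair :: "'a \<Rightarrow> 'a \<Rightarrow> bool" where
  "adj_pair y z \<longleftrightarrow> (\<forall>x\<in>D. hs_inner (A x) y = hs_inner x z)"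

lemma csubspace_D: "csubspace D"
  using lin_op by (simp add: lin_op_def)

lemma A_add: "x \<in> D \<Longrightarrow> y \<in> D \<Longrightarrow> A (x + y) = A x + A y"
  using lin_op by (simp add: lin_op_def clinear_on_def)

lemma A_scaleC: "x \<in> D \<Longrightarrow> A (c *\<^sub>C x) = c *\<^sub>C A x"
  using lin_op by (simp add: lin_op_def clinear_on_def)

lemma A_diff: "x \<in> D \<Longrightarrow> y \<in> D \<Longrightarrow> A (x - y) = A x - A y"
  using A_add[of x "-y"] A_scaleC[of y "-1"] csubspace_minus[OF csubspace_D, of y]
  by (simp add: hs_scaleC_minus_left)

lemma A_zero: "A 0 = 0"
  using A_scaleC[of 0 0] csubspace_zero[OF csubspace_D] by simp

lemma A_symmetric: "x \<in> D \<Longrightarrow> y \<in> D \<Longrightarrow> hs_inner (A x) y = hs_inner x (A y)"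
  using symmetric by (simp add: symmetric_op_def)

lemma Im_hs_inner_A_self: "x \<in> D \<Longrightarrow> Im (hs_inner (A x) x) = 0"
proof -
  assume "x \<in> D"
  then have "hs_inner (A x) x = cnj (hs_inner (A x) x)"
    using A_symmetric[of x x] hs_inner_commute[of x "A x"] by simp
  then show ?thesis by (simp add: complex_eq_iff)
qed

lemma adj_pair_unique: "adj_pair y z \<Longrightarrow> adj_pair y z' \<Longrightarrow> z = z'"
proof -
  assume "adj_pair y z" "adj_pair y z'"
  then have "\<forall>x\<in>D. hs_inner x (z - z') = 0" unfolding adj_pair_def hs_inner_diff_right by simp
  then have "z - z' = 0" using dense by (intro orthogonal_to_dense_eq_zero[of D]) (simp_all add: densely_defined_def)
  then show ?thesis by simp
qed

lemma adj_eqI: "adj_pair y z \<Longrightarrow> adj D A y = z"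
  unfolding adj_def by (rule the_equality) (auto simp: adj_pair_def[symmetric] adj_pair_unique)

lemma adj_pair_imp_adj_dom: "adj_pair y z \<Longrightarrow> y \<in> adj_dom D A"
  unfolding adj_dom_def adj_pair_def by blast

lemma adj_pair_adj: "y \<in> adj_dom D A \<Longrightarrow> adj_pair y (adj D A y)"
  using adj_eqI unfolding adj_dom_def adj_pair_def[symmetric] by blast

lemma adj_pair_add: "adj_pair y z \<Longrightarrow> adj_pair y' z' \<Longrightarrow> adj_pair (y + y') (z + z')"
  by (simp add: adj_pair_def hs_inner_add_right)

lemma adj_pair_scaleC: "adj_pair y z \<Longrightarrow> adj_pair (c *\<^sub>C y) (c *\<^sub>C z)"
  by (simp add: adj_pair_def hs_inner_scaleC_right)

lemma adj_pair_diff: "adj_pair y z \<Longrightarrow> adj_pair y' z' \<Longrightarrow> adj_pair (y - y') (z - z')"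
  by (simp add: adj_pair_def hs_inner_diff_right)

lemma adj_pair_A: "x \<in> D \<Longrightarrow> adj_pair x (A x)"
  by (simp add: adj_pair_def A_symmetric)

lemma deficiency_iff: "y \<in> deficiency D A s \<longleftrightarrow> adj_pair y ((s * \<i>) *\<^sub>C y)"
proof
  assume "y \<in> deficiency D A s"
  then show "adj_pair y ((s * \<i>) *\<^sub>C y)" unfolding deficiency_def using adj_pair_adj by force
next
  assume "adj_pair y ((s * \<i>) *\<^sub>C y)"
  then show "y \<in> deficiency D A s" unfolding deficiency_def using adj_eqI adj_pair_imp_adj_dom by blast
qed

lemma Nplus_iff: "y \<in> Np \<longleftrightarrow> adj_pair y (\<i> *\<^sub>C y)"
  using deficiency_iff[of y 1] by simp

lemma Nminus_iff: "y \<in> Nm \<longleftrightarrow> adj_pair y ((- \<i>) *\<^sub>C y)"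
  using deficiency_iff[of y "-1"] by simp

lemma Nplus_iff_orthogonal: "y \<in> Np \<longleftrightarrow> (\<forall>x\<in>D. hs_inner (A x + \<i> *\<^sub>C x) y = 0)"
  unfolding Nplus_iff adj_pair_def
  by (simp add: hs_inner_add_left hs_inner_scaleC_left hs_inner_scaleC_right eq_neg_iff_add_eq_0)

lemma Nminus_iff_orthogonal: "y \<in> Nm \<longleftrightarrow> (\<forall>x\<in>D. hs_inner (A x - \<i> *\<^sub>C x) y = 0)"
  unfolding Nminus_iff adj_pair_def
  by (simp add: hs_inner_diff_left hs_inner_scaleC_left hs_inner_scaleC_right eq_neg_iff_add_eq_0)

lemma csubspace_deficiency: "csubspace (deficiency D A s)"
  unfolding csubspace_def
proof (intro conjI ballI allI)
  show "0 \<in> deficiency D A s" unfolding deficiency_iff by (simp add: adj_pair_def)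
  fix x y assume "x \<in> deficiency D A s" "y \<in> deficiency D A s"
  then show "x + y \<in> deficiency D A s"
    unfolding deficiency_iff using adj_pair_add by (simp add: hs_scaleC_add_right)
next
  fix c x assume "x \<in> deficiency D A s"
  then have "adj_pair (c *\<^sub>C x) (c *\<^sub>C ((s * \<i>) *\<^sub>C x))"
    unfolding deficiency_iff by (rule adj_pair_scaleC)
  then show "c *\<^sub>C x \<in> deficiency D A s"
    unfolding deficiency_iff by (simp add: mult.commute[of c])
qed

lemmas csubspace_Nplus = csubspace_deficiency[of 1, simplified]
lemmas csubspace_Nminus = csubspace_deficiency[of "-1"]

definition Eplus where "Eplus = (SOME E. finite E \<and> orthonormal E \<and> cspan E = Np)"
definition Eminus where "Eminus = (SOME E. finite E \<and> orthonormal E \<and> cspan E = Nm)"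

lemma Eplus: "finite Eplus" "orthonormal Eplus" "cspan Eplus = Np"
  using someI_ex[OF orthonormal_basis_exists[OF csubspace_Nplus finite_Nplus]] unfolding Eplus_def by blast+

lemma Eminus: "finite Eminus" "orthonormal Eminus" "cspan Eminus = Nm"
  using someI_ex[OF orthonormal_basis_exists[OF csubspace_Nminus finite_Nminus]] unfolding Eminus_def by blast+

abbreviation "Pplus \<equiv> proj Eplus"
abbreviation "Pminus \<equiv> proj Eminus"

lemma Pplus_in: "Pplus w \<in> Np" and Pminus_in: "Pminus w \<in> Nm"
  using proj_in_cspan Eplus Eminus by blast+

lemma Pplus_id: "y \<in> Np \<Longrightarrow> Pplus y = y" and Pminus_id: "y \<in> Nm \<Longrightarrow> Pminus y = y"
  using proj_cspan_id Eplus Eminus by blast+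

lemma norm_Pplus_le: "norm (Pplus w) \<le> norm w" and norm_Pminus_le: "norm (Pminus w) \<le> norm w"
  using norm_proj_le Eplus Eminus by blast+

lemma Pplus_range_shift_zero: "x \<in> D \<Longrightarrow> Pplus (A x + \<i> *\<^sub>C x) = 0"
  using Nplus_iff_orthogonal Eplus(3) cspan_superset hs_inner_eq_zero_commute
  by (intro proj_orthogonal) blast

lemma Pminus_range_shift_zero: "x \<in> D \<Longrightarrow> Pminus (A x - \<i> *\<^sub>C x) = 0"
  using Nminus_iff_orthogonal Eminus(3) cspan_superset hs_inner_eq_zero_commute
  by (intro proj_orthogonal) blast

definition range_shift :: "complex \<Rightarrow> 'a set" where
  "range_shift c = {A x + c *\<^sub>C x | x. x \<in> D}"

lemma csubspace_range_shift: "csubspace (range_shift c)"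
  unfolding csubspace_def range_shift_def
proof (intro conjI ballI allI)
  show "0 \<in> {A x + c *\<^sub>C x |x. x \<in> D}" using csubspace_zero[OF csubspace_D] A_zero by force
next
  fix u v assume "u \<in> {A x + c *\<^sub>C x |x. x \<in> D}" "v \<in> {A x + c *\<^sub>C x |x. x \<in> D}"
  then obtain x y where "x \<in> D" "y \<in> D" "u = A x + c *\<^sub>C x" "v = A y + c *\<^sub>C y" by blast
  then have "u + v = A (x + y) + c *\<^sub>C (x + y)" "x + y \<in> D"
    by (simp_all add: A_add hs_scaleC_add_right csubspace_add[OF csubspace_D] algebra_simps)
  then show "u + v \<in> {A x + c *\<^sub>C x |x. x \<in> D}" by blast
next
  fix d u assume "u \<in> {A x + c *\<^sub>C x |x. x \<in> D}"
  then obtain x where "x \<in> D" "u = A x + c *\<^sub>C x" by blast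
  then have "d *\<^sub>C u = A (d *\<^sub>C x) + c *\<^sub>C (d *\<^sub>C x)" "d *\<^sub>C x \<in> D"
    by (simp_all add: A_scaleC hs_scaleC_add_right csubspace_scaleC[OF csubspace_D] mult.commute)
  then show "d *\<^sub>C u \<in> {A x + c *\<^sub>C x |x. x \<in> D}" by blast
qed

lemma norm_A_shift_square:
  assumes "x \<in> D" "Re c = 0" "cmod c = 1"
  shows "(norm (A x + c *\<^sub>C x))\<^sup>2 = (norm (A x))\<^sup>2 + (norm x)\<^sup>2"
proof -
  have "Re (hs_inner (A x) (c *\<^sub>C x)) = 0"
    using assms Im_hs_inner_A_self[OF assms(1)] by (simp add: hs_inner_scaleC_right)
  then show ?thesis by (simp add: norm_add_square norm_hs_scaleC assms)
qed

text \<open>Closedness of A enters the proof only here.\<close>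

lemma closed_range_shift:
  assumes c: "Re c = 0" "cmod c = 1"
  shows "closed (range_shift c)"
proof (rule closed_sequential_limits[THEN iffD2], intro allI impI, elim conjE)
  fix y l assume y: "\<forall>n. y n \<in> range_shift c" and l: "y \<longlonglongrightarrow> l"
  then have "\<forall>n. \<exists>x. x \<in> D \<and> y n = A x + c *\<^sub>C x" by (auto simp: range_shift_def)
  then obtain x where x: "\<And>n. x n \<in> D" and yx: "\<And>n. y n = A (x n) + c *\<^sub>C x n"
    by metis
  have sq: "(norm (A (x n) - A (x m)))\<^sup>2 + (norm (x n - x m))\<^sup>2 = (norm (y n - y m))\<^sup>2" for n m
  proof -
    have "y n - y m = A (x n - x m) + c *\<^sub>C (x n - x m)"
      by (simp add: yx A_diff[OF x x] hs_scaleC_diff_right)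
    then have "(norm (y n - y m))\<^sup>2 = (norm (A (x n - x m)))\<^sup>2 + (norm (x n - x m))\<^sup>2"
      using norm_A_shift_square[OF csubspace_diff[OF csubspace_D x x] c] by presburger
    then show ?thesis unfolding A_diff[OF x x] by linarith
  qed
  have sq_le: "(norm (x n - x m))\<^sup>2 \<le> (norm (y n - y m))\<^sup>2"
    "(norm (A (x n) - A (x m)))\<^sup>2 \<le> (norm (y n - y m))\<^sup>2" for n m
    using sq[of n m] zero_le_power2[of "norm (x n - x m)"] zero_le_power2[of "norm (A (x n) - A (x m))"]
    by linarith+
  have dists: "dist (x n) (x m) \<le> dist (y n) (y m)" "dist (A (x n)) (A (x m)) \<le> dist (y n) (y m)"
    for n m unfolding dist_norm by (rule power2_le_imp_le[OF sq_le(1)] power2_le_imp_le[OF sq_le(2)], simp)+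
  have "Cauchy y" using l by (rule LIMSEQ_imp_Cauchy)
  then have "Cauchy x" "Cauchy (\<lambda>n. A (x n))"
    by (rule Cauchy_dominated[OF _ dists(1)], rule Cauchy_dominated[OF _ dists(2)])
  then obtain x0 z0 where x0: "x \<longlonglongrightarrow> x0" and z0: "(\<lambda>n. A (x n)) \<longlonglongrightarrow> z0"
    unfolding Cauchy_convergent_iff convergent_def by blast
  have "(x0, z0) \<in> {(u, A u) | u. u \<in> D}"
    using closed unfolding closed_op_def
    by (rule closed_sequentially[where f = "\<lambda>n. (x n, A (x n))"]) (use x tendsto_Pair[OF x0 z0] in auto)
  then have x0D: "x0 \<in> D" and z0A: "z0 = A x0" by auto
  have "y \<longlonglongrightarrow> z0 + c *\<^sub>C x0" unfolding yx by (intro tendsto_add z0 tendsto_hs_scaleC x0)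
  then have "l = z0 + c *\<^sub>C x0" by (rule LIMSEQ_unique[OF l])
  then show "l \<in> range_shift c" using x0D z0A unfolding range_shift_def by blast
qed

lemma range_plus_decomposition: "\<exists>x\<in>D. w = (A x + \<i> *\<^sub>C x) + Pplus w"
proof -
  have "closed (range_shift \<i>)" by (rule closed_range_shift) simp_all
  then obtain r where r: "r \<in> range_shift \<i>" "\<forall>s\<in>range_shift \<i>. hs_inner s ((w - Pplus w) - r) = 0"
    using orthogonal_projection_exists[OF csubspace_range_shift] by blast
  define v where "v = (w - Pplus w) - r"
  have "v \<in> Np" unfolding Nplus_iff_orthogonal using r(2) by (auto simp: range_shift_def v_def)
  then have "hs_inner v (w - Pplus w) = 0"
    using orthogonal_proj_residual[OF Eplus(1,2)] Eplus(3) by blast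
  moreover have "hs_inner v r = 0" using r hs_inner_eq_zero_commute unfolding v_def by blast
  ultimately have "hs_inner v v = 0" by (simp add: v_def hs_inner_diff_right)
  then have "w - Pplus w = r" by (simp add: hs_inner_self_eq_zero v_def)
  then show ?thesis using r(1) by (auto simp: range_shift_def algebra_simps)
qed

text \<open>The components of h in Dom(A*) = D + N+ + N-: the N+ component of A* h + i h is 2i times
  that of h, and the N- component of A* h - i h is -2i times that of h.\<close>

definition plus_part :: "'a \<Rightarrow> 'a" where
  "plus_part h = (- \<i> / 2) *\<^sub>C Pplus (adj D A h + \<i> *\<^sub>C h)"

definition minus_part :: "'a \<Rightarrow> 'a" where
  "minus_part h = (\<i> / 2) *\<^sub>C Pminus (adj D A h - \<i> *\<^sub>C h)"

lemma plus_part_in: "plus_part h \<in> Np"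
  unfolding plus_part_def by (rule csubspace_scaleC[OF csubspace_Nplus Pplus_in])

lemma minus_part_in: "minus_part h \<in> Nm"
  unfolding minus_part_def by (rule csubspace_scaleC[OF csubspace_Nminus Pminus_in])

lemma adj_pair_sum:
  assumes "x \<in> D" "p \<in> Np" "m \<in> Nm"
  shows "adj_pair (x + p + m) (A x + \<i> *\<^sub>C p - \<i> *\<^sub>C m)"
proof -
  have "adj_pair (x + p + m) (A x + \<i> *\<^sub>C p + (- \<i>) *\<^sub>C m)"
    using assms Nplus_iff Nminus_iff by (intro adj_pair_add adj_pair_A) auto
  then show ?thesis by (simp add: hs_scaleC_minus_left)
qed

lemma adj_sum: "x \<in> D \<Longrightarrow> p \<in> Np \<Longrightarrow> m \<in> Nm \<Longrightarrow> adj D A (x + p + m) = A x + \<i> *\<^sub>C p - \<i> *\<^sub>C m"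
  by (rule adj_eqI[OF adj_pair_sum])

lemma parts_sum:
  assumes x: "x \<in> D" and p: "p \<in> Np" and m: "m \<in> Nm"
  shows "plus_part (x + p + m) = p" "minus_part (x + p + m) = m"
proof -
  have "adj D A (x + p + m) + \<i> *\<^sub>C (x + p + m) = (A x + \<i> *\<^sub>C x) + (2 * \<i>) *\<^sub>C p"
    unfolding adj_sum[OF assms] by (simp add: hs_scaleC_add_right hs_scaleC_add_self)
  then have "Pplus (adj D A (x + p + m) + \<i> *\<^sub>C (x + p + m)) = (2 * \<i>) *\<^sub>C p"
    by (simp only: proj_add[of Eplus "A x + \<i> *\<^sub>C x"] proj_scaleC Pplus_range_shift_zero[OF x] Pplus_id[OF p] add_0_left)
  then show "plus_part (x + p + m) = p" by (simp add: plus_part_def)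
  have "adj D A (x + p + m) - \<i> *\<^sub>C (x + p + m) = (A x - \<i> *\<^sub>C x) + (2 * - \<i>) *\<^sub>C m"
    unfolding adj_sum[OF assms] hs_scaleC_add_self[symmetric]
    by (simp add: hs_scaleC_add_right hs_scaleC_minus_left algebra_simps)
  then have "Pminus (adj D A (x + p + m) - \<i> *\<^sub>C (x + p + m)) = (2 * - \<i>) *\<^sub>C m"
    by (simp only: proj_add[of Eminus "A x - \<i> *\<^sub>C x"] proj_scaleC Pminus_range_shift_zero[OF x] Pminus_id[OF m] add_0_left)
  then show "minus_part (x + p + m) = m" by (simp add: minus_part_def)
qed

lemma adj_dom_decomposition:
  assumes h: "h \<in> adj_dom D A"
  shows "\<exists>x\<in>D. h = x + plus_part h + minus_part h"
proof -
  define w where "w = adj D A h + \<i> *\<^sub>C h"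
  obtain x where x: "x \<in> D" "w = (A x + \<i> *\<^sub>C x) + Pplus w" using range_plus_decomposition by blast
  define p where "p = plus_part h"
  have p: "p \<in> Np" unfolding p_def by (rule plus_part_in)
  have "Pplus w = (2 * \<i>) *\<^sub>C p" by (simp add: p_def plus_part_def w_def)
  then have "w = A x + \<i> *\<^sub>C x + (2 * \<i>) *\<^sub>C p" using x(2) by simp
  then have "adj D A h + \<i> *\<^sub>C h = A x + \<i> *\<^sub>C x + (2 * \<i>) *\<^sub>C p" by (simp only: w_def)
  then have adj_h: "adj D A h = A x + \<i> *\<^sub>C x + (2 * \<i>) *\<^sub>C p - \<i> *\<^sub>C h"
    by (rule eq_diff_eq[THEN iffD2])
  define m where "m = h - x - p"
  have "adj_pair m (adj D A h - A x - \<i> *\<^sub>C p)"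
    unfolding m_def using p Nplus_iff by (intro adj_pair_diff adj_pair_adj[OF h] adj_pair_A[OF x(1)]) blast
  moreover have "adj D A h - A x - \<i> *\<^sub>C p = (- \<i>) *\<^sub>C m"
    unfolding adj_h m_def hs_scaleC_add_self[symmetric]
    by (simp add: hs_scaleC_diff_right hs_scaleC_minus_left hs_scaleC_add_right algebra_simps)
  ultimately have m: "m \<in> Nm" unfolding Nminus_iff by simp
  have "h = x + p + m" by (simp add: m_def)
  then show ?thesis using parts_sum(2)[OF x(1) p m] x(1) p_def by auto
qed

lemma adj_dom_add: "h \<in> adj_dom D A \<Longrightarrow> h' \<in> adj_dom D A \<Longrightarrow> h + h' \<in> adj_dom D A"
  using adj_pair_add adj_pair_adj adj_pair_imp_adj_dom by blast

lemma D_subset_adj_dom: "x \<in> D \<Longrightarrow> x \<in> adj_dom D A"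
  using adj_pair_A adj_pair_imp_adj_dom by blast

lemma parts_add:
  assumes "h \<in> adj_dom D A" "h' \<in> adj_dom D A"
  shows "plus_part (h + h') = plus_part h + plus_part h'"
    "minus_part (h + h') = minus_part h + minus_part h'"
proof -
  obtain x where x: "x \<in> D" "h = x + plus_part h + minus_part h"
    using adj_dom_decomposition[OF assms(1)] by blast
  obtain x' where x': "x' \<in> D" "h' = x' + plus_part h' + minus_part h'"
    using adj_dom_decomposition[OF assms(2)] by blast
  have "h + h' = (x + plus_part h + minus_part h) + (x' + plus_part h' + minus_part h')"
    by (rule arg_cong2[where f = "(+)", OF x(2) x'(2)])
  also have "\<dots> = (x + x') + (plus_part h + plus_part h') + (minus_part h + minus_part h')"
    by (simp add: algebra_simps)
  finally have "h + h' = (x + x') + (plus_part h + plus_part h') + (minus_part h + minus_part h')" .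
  moreover have "x + x' \<in> D" "plus_part h + plus_part h' \<in> Np" "minus_part h + minus_part h' \<in> Nm"
    by (rule csubspace_add[OF csubspace_D x(1) x'(1)],
        rule csubspace_add[OF csubspace_Nplus plus_part_in plus_part_in],
        rule csubspace_add[OF csubspace_Nminus minus_part_in minus_part_in])
  ultimately show "plus_part (h + h') = plus_part h + plus_part h'"
    "minus_part (h + h') = minus_part h + minus_part h'"
    using parts_sum by simp_all
qed

lemma parts_scaleC:
  assumes "h \<in> adj_dom D A"
  shows "plus_part (c *\<^sub>C h) = c *\<^sub>C plus_part h" "minus_part (c *\<^sub>C h) = c *\<^sub>C minus_part h"
proof -
  obtain x where x: "x \<in> D" "h = x + plus_part h + minus_part h"
    using adj_dom_decomposition[OF assms] by blast
  have "c *\<^sub>C h = c *\<^sub>C x + c *\<^sub>C plus_part h + c *\<^sub>C minus_part h"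
    by (subst x(2)) (simp only: hs_scaleC_add_right)
  moreover have "c *\<^sub>C x \<in> D" "c *\<^sub>C plus_part h \<in> Np" "c *\<^sub>C minus_part h \<in> Nm"
    by (rule csubspace_scaleC[OF csubspace_D x(1)], rule csubspace_scaleC[OF csubspace_Nplus plus_part_in],
        rule csubspace_scaleC[OF csubspace_Nminus minus_part_in])
  ultimately show "plus_part (c *\<^sub>C h) = c *\<^sub>C plus_part h" "minus_part (c *\<^sub>C h) = c *\<^sub>C minus_part h"
    using parts_sum by simp_all
qed

lemma parts_D_eq_zero: "x \<in> D \<Longrightarrow> plus_part x = 0 \<and> minus_part x = 0"
  using parts_sum[OF _ csubspace_zero[OF csubspace_Nplus] csubspace_zero[OF csubspace_Nminus], of x] by simp

lemma Im_adj_inner_self: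
  assumes h: "h \<in> adj_dom D A"
  shows "Im (hs_inner (adj D A h) h) = (norm (minus_part h))\<^sup>2 - (norm (plus_part h))\<^sup>2"
proof -
  obtain x where x: "x \<in> D" "h = x + plus_part h + minus_part h"
    using adj_dom_decomposition[OF h] by blast
  define p m where "p = plus_part h" and "m = minus_part h"
  have p: "p \<in> Np" and m: "m \<in> Nm" unfolding p_def m_def by (rule plus_part_in, rule minus_part_in)
  have "hs_inner (A x) p = \<i> * hs_inner x p" "hs_inner (A x) m = - \<i> * hs_inner x m"
    using p m x(1) unfolding Nplus_iff Nminus_iff adj_pair_def by (simp_all add: hs_inner_scaleC_right)
  moreover have "hs_inner p x = cnj (hs_inner x p)" "hs_inner m x = cnj (hs_inner x m)"
    "hs_inner m p = cnj (hs_inner p m)" by (simp_all add: hs_inner_commute[of _ x] hs_inner_commute[of m])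
  moreover have "adj D A h = A x + \<i> *\<^sub>C p - \<i> *\<^sub>C m" "h = x + p + m"
    using adj_sum[OF x(1) p m] x(2) unfolding p_def m_def by simp_all
  ultimately show ?thesis
    unfolding p_def[symmetric] m_def[symmetric]
    by (simp add: hs_inner_simps hs_inner_self Im_hs_inner_A_self[OF x(1)])
qed

end

section \<open>Invariance under a group of affine maps\<close>

locale invariant_symmetric_operator = symmetric_operator D A
  for D :: "'a::chilbert set" and A +
  fixes G :: "(real \<times> real) set" and U :: "real \<times> real \<Rightarrow> 'a \<Rightarrow> 'a"
  assumes subgroup: "aff_subgroup G" and rep: "strongly_cont_unitary_rep G U"
    and invariant: "G_invariant G U D A"
begin

lemma fst_pos: "g \<in> G \<Longrightarrow> fst g > 0"
  using subgroup by (auto simp: aff_subgroup_def affgrp_def)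

lemma ginv_in: "g \<in> G \<Longrightarrow> ginv g \<in> G"
  using subgroup by (simp add: aff_subgroup_def)

lemma unitary_U: "g \<in> G \<Longrightarrow> unitary (U g)"
  using rep by (simp add: strongly_cont_unitary_rep_def)

lemma clinear_U: "g \<in> G \<Longrightarrow> clinear_on UNIV (U g)"
  using unitary_U by (simp add: unitary_def)

lemma U_add: "g \<in> G \<Longrightarrow> U g (x + y) = U g x + U g y"
  and U_scaleC: "g \<in> G \<Longrightarrow> U g (c *\<^sub>C x) = c *\<^sub>C U g x"
  using clinear_U by (simp_all add: clinear_on_def)

lemma U_diff: "g \<in> G \<Longrightarrow> U g (x - y) = U g x - U g y"
  using U_add[of g x "-y"] U_scaleC[of g "-1" y] by (simp add: hs_scaleC_minus_left)

lemma U_scaleR: "g \<in> G \<Longrightarrow> U g (r *\<^sub>R x) = r *\<^sub>R U g x"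
  using U_scaleC[of g "complex_of_real r" x] by (simp add: hs_scaleC_of_real)

lemma norm_U: "g \<in> G \<Longrightarrow> norm (U g x) = norm x"
  using unitary_U by (simp add: unitary_def)

lemma hs_inner_U: "g \<in> G \<Longrightarrow> hs_inner (U g x) (U g y) = hs_inner x y"
  using unitary_U unitary_hs_inner by blast

lemma U_mult: "g \<in> G \<Longrightarrow> h \<in> G \<Longrightarrow> U (gmult g h) x = U g (U h x)"
  using rep by (simp add: strongly_cont_unitary_rep_def)

lemma U_ginv_U: "g \<in> G \<Longrightarrow> U (ginv g) (U g x) = x"
  and U_U_ginv: "g \<in> G \<Longrightarrow> U g (U (ginv g) x) = x"
proof -
  assume g: "g \<in> G"
  have "gmult (ginv g) g = (1, 0)" "gmult g (ginv g) = (1, 0)"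
    using fst_pos[OF g] by (auto simp: gmult_def ginv_def field_simps)
  moreover have "U (1, 0) = id" using rep by (simp add: strongly_cont_unitary_rep_def)
  ultimately show "U (ginv g) (U g x) = x" "U g (U (ginv g) x) = x"
    using U_mult[OF ginv_in[OF g] g] U_mult[OF g ginv_in[OF g]] by simp_all
qed

lemma U_in_D: "g \<in> G \<Longrightarrow> x \<in> D \<Longrightarrow> U g x \<in> D"
  using invariant by (auto simp: G_invariant_def)

lemma U_A_U_ginv: "g \<in> G \<Longrightarrow> x \<in> D \<Longrightarrow> U g (A (U (ginv g) x)) = fst g *\<^sub>R A x + snd g *\<^sub>R x"
proof -
  assume g: "g \<in> G" and "x \<in> D"
  have "inv (U g) x = U (ginv g) x"
    using U_U_ginv[OF g] bij_is_inj unitary_U[OF g] inv_f_f unfolding unitary_def by metis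
  moreover have "U g (A (inv (U g) x)) = fst g *\<^sub>R A x + snd g *\<^sub>R x"
    using invariant g \<open>x \<in> D\<close> unfolding G_invariant_def by blast
  ultimately show ?thesis by simp
qed

lemma adj_pair_U:
  assumes g: "g \<in> G" and k: "adj_pair k w"
  shows "adj_pair (U g k) ((1 / fst g) *\<^sub>R U g (w - snd g *\<^sub>R k))"
  unfolding adj_pair_def
proof
  fix x assume x: "x \<in> D"
  define x' where "x' = U (ginv g) x"
  have x': "x' \<in> D" "U g x' = x" unfolding x'_def by (rule U_in_D[OF ginv_in[OF g] x], rule U_U_ginv[OF g])
  have "A x = (1 / fst g) *\<^sub>R (U g (A x') - snd g *\<^sub>R x)"
    using U_A_U_ginv[OF g x] fst_pos[OF g] unfolding x'_def by (simp add: field_simps)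
  then have "hs_inner (A x) (U g k)
      = complex_of_real (1 / fst g) * (hs_inner (A x') k - complex_of_real (snd g) * hs_inner x' k)"
    by (simp add: hs_inner_scaleR_left hs_inner_diff_left hs_inner_U[OF g] x'(2)[symmetric])
  also have "hs_inner (A x') k = hs_inner x' w" using k x'(1) by (simp add: adj_pair_def)
  also have "complex_of_real (1 / fst g) * (hs_inner x' w - complex_of_real (snd g) * hs_inner x' k)
      = hs_inner x ((1 / fst g) *\<^sub>R U g (w - snd g *\<^sub>R k))"
    by (simp add: hs_inner_U[OF g] hs_inner_diff_right hs_inner_scaleR_right x'(2)[symmetric])
  finally show "hs_inner (A x) (U g k) = hs_inner x ((1 / fst g) *\<^sub>R U g (w - snd g *\<^sub>R k))" .
qed

lemma U_in_adj_dom: "g \<in> G \<Longrightarrow> k \<in> adj_dom D A \<Longrightarrow> U g k \<in> adj_dom D A"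
  using adj_pair_U adj_pair_adj adj_pair_imp_adj_dom by blast

lemma Im_adj_inner_self_U:
  assumes g: "g \<in> G" and k: "k \<in> adj_dom D A"
  shows "Im (hs_inner (adj D A (U g k)) (U g k)) = Im (hs_inner (adj D A k) k) / fst g"
proof -
  have "adj D A (U g k) = (1 / fst g) *\<^sub>R U g (adj D A k - snd g *\<^sub>R k)"
    by (rule adj_eqI[OF adj_pair_U[OF g adj_pair_adj[OF k]]])
  then have "hs_inner (adj D A (U g k)) (U g k)
     = complex_of_real (1 / fst g) * (hs_inner (adj D A k) k - complex_of_real (snd g) * hs_inner k k)"
    by (simp add: hs_inner_scaleR_left hs_inner_U[OF g] hs_inner_diff_left)
  then show ?thesis by (simp add: hs_inner_self)
qed

text \<open>The hypothesis says Im \<langle>A* h, h\<rangle> \<le> 0, and U_g rescales this form by 1/a > 0.\<close>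

lemma norm_minus_part_U_le:
  assumes g: "g \<in> G" and h: "h \<in> adj_dom D A"
    and le: "norm (minus_part h) \<le> norm (plus_part h)"
  shows "norm (minus_part (U g h)) \<le> norm (plus_part (U g h))"
proof -
  have "Im (hs_inner (adj D A h) h) \<le> 0"
    using le by (simp add: Im_adj_inner_self[OF h] power_mono)
  then have "Im (hs_inner (adj D A (U g h)) (U g h)) \<le> 0"
    using fst_pos[OF g] by (simp add: Im_adj_inner_self_U[OF g h] divide_nonpos_pos)
  then have "(norm (minus_part (U g h)))\<^sup>2 \<le> (norm (plus_part (U g h)))\<^sup>2"
    using Im_adj_inner_self[OF U_in_adj_dom[OF g h]] by simp
  then show ?thesis by (rule power2_le_imp_le) simp
qed

end

section \<open>Maximal dissipative extensions and their transport\<close>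

context symmetric_operator
begin

lemma contractionsD:
  assumes "V \<in> contractions D A"
  shows "clinear_on Np V" "f \<in> Np \<Longrightarrow> V f \<in> Nm" "f \<in> Np \<Longrightarrow> norm (V f) \<le> norm f"
    "f \<notin> Np \<Longrightarrow> V f = 0"
  using assms unfolding contractions_def by blast+

lemma ext_dom_iff: "h \<in> ext_dom D A V \<longleftrightarrow> (\<exists>x f. h = x + (f - V f) \<and> x \<in> D \<and> f \<in> Np)"
  unfolding ext_dom_def by blast

lemma parts_ext_dom:
  assumes V: "V \<in> contractions D A" and x: "x \<in> D" and f: "f \<in> Np"
  shows "x + (f - V f) \<in> adj_dom D A" "plus_part (x + (f - V f)) = f"
    "minus_part (x + (f - V f)) = - V f"
proof -
  have m: "- V f \<in> Nm" by (rule csubspace_minus[OF csubspace_Nminus contractionsD(2)[OF V f]])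
  have eq: "x + (f - V f) = x + f + - V f" by simp
  show "x + (f - V f) \<in> adj_dom D A" unfolding eq by (rule adj_pair_imp_adj_dom[OF adj_pair_sum[OF x f m]])
  show "plus_part (x + (f - V f)) = f" "minus_part (x + (f - V f)) = - V f"
    unfolding eq using parts_sum[OF x f m] by simp_all
qed

lemma ext_dom_subset_imp_eq:
  assumes V: "V \<in> contractions D A" and V': "V' \<in> contractions D A"
    and sub: "ext_dom D A V \<subseteq> ext_dom D A V'"
  shows "V = V'"
proof
  fix f show "V f = V' f"
  proof (cases "f \<in> Np")
    case False then show ?thesis using contractionsD(4)[OF V] contractionsD(4)[OF V'] by simp
  next
    case True
    have "0 + (f - V f) \<in> ext_dom D A V" unfolding ext_dom_iff using True csubspace_zero[OF csubspace_D] by blast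
    then have "0 + (f - V f) \<in> ext_dom D A V'" using sub by blast
    then obtain x f' where xf: "0 + (f - V f) = x + (f' - V' f')" "x \<in> D" "f' \<in> Np"
      unfolding ext_dom_iff by blast
    have "plus_part (0 + (f - V f)) = f" "minus_part (0 + (f - V f)) = - V f"
      using parts_ext_dom(2,3)[OF V csubspace_zero[OF csubspace_D] True] by simp_all
    moreover have "plus_part (0 + (f - V f)) = f'" "minus_part (0 + (f - V f)) = - V' f'"
      unfolding xf(1) using parts_ext_dom(2,3)[OF V' xf(2,3)] by simp_all
    ultimately show ?thesis by simp
  qed
qed

text \<open>W (L f) = M f is well defined on the range of L because |M f| \<le> |L f|; on the rest of N+
  W is defined through the orthogonal projection onto that range.\<close>

lemma contraction_extension:
  assumes L: "clinear_on Np L" "\<And>f. f \<in> Np \<Longrightarrow> L f \<in> Np"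
    and M: "clinear_on Np M" "\<And>f. f \<in> Np \<Longrightarrow> M f \<in> Nm"
    and le: "\<And>f. f \<in> Np \<Longrightarrow> norm (M f) \<le> norm (L f)"
  shows "\<exists>W\<in>contractions D A. \<forall>f\<in>Np. W (L f) = M f"
proof -
  have "L ` Np = cspan (L ` Eplus)" using image_cspan[of Eplus L] L(1) Eplus(3) by simp
  then obtain EK where EK: "finite EK" "orthonormal EK" "cspan EK = L ` Np"
    using Gram_Schmidt[of "L ` Eplus"] Eplus(1) by auto
  have M_eq: "M f = M f'" if "f \<in> Np" "f' \<in> Np" "L f = L f'" for f f'
    by (rule dominated_clinear_factors[OF csubspace_Nplus L(1) M(1) le that])
  have "\<exists>f. f \<in> Np \<and> L f = proj EK q" for q
    using proj_in_cspan[of EK q] EK(3) by auto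
  then obtain pre where pre: "\<And>q. pre q \<in> Np" "\<And>q. L (pre q) = proj EK q" by metis
  define W where "W q = (if q \<in> Np then M (pre q) else 0)" for q
  have W_L: "W (L f) = M f" if "f \<in> Np" for f
    using that L(2) M_eq[OF pre(1) that] pre(2) proj_cspan_id[OF EK(1,2)] EK(3) by (auto simp: W_def)
  have add: "W (q + q') = W q + W q'" if "q \<in> Np" "q' \<in> Np" for q q'
  proof -
    have "L (pre (q + q')) = L (pre q + pre q')"
      using L(1) pre by (simp add: clinear_on_def proj_add)
    then show ?thesis
      using that M(1) pre M_eq[OF pre(1) csubspace_add[OF csubspace_Nplus pre(1) pre(1)]]
      by (simp add: W_def clinear_on_def csubspace_add[OF csubspace_Nplus])
  qed
  have scale: "W (c *\<^sub>C q) = c *\<^sub>C W q" if "q \<in> Np" for c q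
  proof -
    have "L (pre (c *\<^sub>C q)) = L (c *\<^sub>C pre q)"
      using L(1) pre by (simp add: clinear_on_def proj_scaleC)
    then show ?thesis
      using that M(1) pre M_eq[OF pre(1) csubspace_scaleC[OF csubspace_Nplus pre(1)]]
      by (simp add: W_def clinear_on_def csubspace_scaleC[OF csubspace_Nplus])
  qed
  have bound: "norm (W q) \<le> norm q" if "q \<in> Np" for q
  proof -
    have "norm (W q) \<le> norm (L (pre q))" using that le[OF pre(1)] by (simp add: W_def)
    also have "\<dots> \<le> norm q" using pre(2) norm_proj_le[OF EK(1,2)] by simp
    finally show ?thesis .
  qed
  have "W \<in> contractions D A"
    unfolding contractions_def clinear_on_def using add scale bound M(2) pre(1)
    by (auto simp: W_def)
  then show ?thesis using W_L by blast
qed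

lemma adj_pair_diff_contraction:
  assumes V: "V \<in> contractions D A" and f: "f \<in> Np"
  shows "adj_pair (f - V f) (\<i> *\<^sub>C f + \<i> *\<^sub>C V f)"
proof -
  have "adj_pair (0 + f + - V f) (A 0 + \<i> *\<^sub>C f - \<i> *\<^sub>C (- V f))"
    by (rule adj_pair_sum[OF csubspace_zero[OF csubspace_D] f
          csubspace_minus[OF csubspace_Nminus contractionsD(2)[OF V f]]])
  then show ?thesis by (simp add: A_zero hs_scaleC_minus_right)
qed

lemma opdist_bdd:
  assumes V: "V \<in> contractions D A" and V': "V' \<in> contractions D A"
  shows "bdd_above ((\<lambda>f. norm (V f - V' f)) ` {f \<in> Np. norm f \<le> 1})"
proof (rule bdd_aboveI[of _ 2])
  fix y assume "y \<in> (\<lambda>f. norm (V f - V' f)) ` {f \<in> Np. norm f \<le> 1}"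
  then obtain f where f: "f \<in> Np" "norm f \<le> 1" "y = norm (V f - V' f)" by blast
  have "norm (V f - V' f) \<le> norm (V f) + norm (V' f)" by (rule norm_triangle_ineq4)
  also have "\<dots> \<le> 2" using contractionsD(3)[OF V f(1)] contractionsD(3)[OF V' f(1)] f(2) by simp
  finally show "y \<le> 2" using f(3) by simp
qed

lemma norm_diff_le_opdist:
  assumes V: "V \<in> contractions D A" and V': "V' \<in> contractions D A" and f: "f \<in> Np"
  shows "norm (V f - V' f) \<le> opdist D A V V' * norm f"
proof (cases "f = 0")
  case True
  then show ?thesis using clinear_on_diff[OF csubspace_Nplus contractionsD(1)[OF V] f f]
      clinear_on_diff[OF csubspace_Nplus contractionsD(1)[OF V'] f f] by simp
next
  case False
  define c where "c = complex_of_real (1 / norm f)"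
  have nf: "norm f > 0" using False by simp
  have cf: "c *\<^sub>C f \<in> Np" "norm (c *\<^sub>C f) \<le> 1"
    using csubspace_scaleC[OF csubspace_Nplus f] nf by (auto simp: c_def norm_hs_scaleC norm_divide)
  have "norm (V (c *\<^sub>C f) - V' (c *\<^sub>C f)) \<le> opdist D A V V'"
    unfolding opdist_def by (rule cSUP_upper[OF _ opdist_bdd[OF V V']]) (use cf in simp)
  moreover have "norm (V (c *\<^sub>C f) - V' (c *\<^sub>C f)) = norm (V f - V' f) / norm f"
    using contractionsD(1)[OF V] contractionsD(1)[OF V'] f nf
    by (simp add: clinear_on_def hs_scaleC_diff_right[symmetric] norm_hs_scaleC c_def norm_divide)
  ultimately show ?thesis using nf by (simp add: divide_le_eq)
qed

lemma opdist_nonneg: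
  assumes "V \<in> contractions D A" "V' \<in> contractions D A"
  shows "opdist D A V V' \<ge> 0"
proof -
  have "norm (V 0 - V' 0) \<le> opdist D A V V'"
    unfolding opdist_def by (rule cSUP_upper[OF _ opdist_bdd[OF assms]]) (simp add: csubspace_zero[OF csubspace_Nplus])
  then show ?thesis using norm_ge_zero order_trans by blast
qed

lemma opdist_le:
  assumes "V \<in> contractions D A" "V' \<in> contractions D A"
    and "\<And>q. q \<in> Np \<Longrightarrow> norm q \<le> 1 \<Longrightarrow> norm (V q - V' q) \<le> B"
  shows "opdist D A V V' \<le> B"
  unfolding opdist_def
  by (rule cSUP_least) (use assms csubspace_zero[OF csubspace_Nplus] in auto)

lemma opdist_self: "V \<in> contractions D A \<Longrightarrow> opdist D A V V = 0"
  using opdist_nonneg[of V V] opdist_le[of V V 0] by fastforce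

lemma diff_contraction_in_adj_dom: "V \<in> contractions D A \<Longrightarrow> f \<in> Np \<Longrightarrow> f - V f \<in> adj_dom D A"
  using adj_pair_diff_contraction adj_pair_imp_adj_dom by blast

end

context invariant_symmetric_operator
begin

text \<open>U_g (x + (f - V f)) = x' + (L f - M f) with L = \<open>trans_plus g V\<close>, M = \<open>trans_minus g V\<close>,
  so Gamma_g(V) is the contraction L f \<mapsto> M f.\<close>

definition trans_plus :: "real \<times> real \<Rightarrow> ('a \<Rightarrow> 'a) \<Rightarrow> 'a \<Rightarrow> 'a" where
  "trans_plus g V f = plus_part (U g (f - V f))"

definition trans_minus :: "real \<times> real \<Rightarrow> ('a \<Rightarrow> 'a) \<Rightarrow> 'a \<Rightarrow> 'a" where
  "trans_minus g V f = - minus_part (U g (f - V f))"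

lemma trans_plus_in: "trans_plus g V f \<in> Np" and trans_minus_in: "trans_minus g V f \<in> Nm"
  unfolding trans_plus_def trans_minus_def
  by (rule plus_part_in, rule csubspace_minus[OF csubspace_Nminus minus_part_in])

lemma clinear_trans:
  assumes g: "g \<in> G" and V: "V \<in> contractions D A"
  shows "clinear_on Np (trans_plus g V)" "clinear_on Np (trans_minus g V)"
proof -
  have dom: "U g (f - V f) \<in> adj_dom D A" if "f \<in> Np" for f
    by (rule U_in_adj_dom[OF g diff_contraction_in_adj_dom[OF V that]])
  have add: "U g ((f + f') - V (f + f')) = U g (f - V f) + U g (f' - V f')" if "f \<in> Np" "f' \<in> Np" for f f'
    using contractionsD(1)[OF V] that by (simp add: clinear_on_def U_add[OF g, symmetric] algebra_simps)
  have scale: "U g (c *\<^sub>C f - V (c *\<^sub>C f)) = c *\<^sub>C U g (f - V f)" if "f \<in> Np" for c f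
    using contractionsD(1)[OF V] that by (simp add: clinear_on_def U_scaleC[OF g] U_diff[OF g] hs_scaleC_diff_right)
  show "clinear_on Np (trans_plus g V)" "clinear_on Np (trans_minus g V)"
    unfolding clinear_on_def trans_plus_def trans_minus_def
    by (simp_all add: add scale parts_add[OF dom dom] parts_scaleC[OF dom] hs_scaleC_minus_right)
qed

lemma norm_trans_minus_le:
  assumes g: "g \<in> G" and V: "V \<in> contractions D A" and f: "f \<in> Np"
  shows "norm (trans_minus g V f) \<le> norm (trans_plus g V f)"
  using norm_minus_part_U_le[OF g diff_contraction_in_adj_dom[OF V f]] contractionsD(3)[OF V f]
    parts_ext_dom(2,3)[OF V csubspace_zero[OF csubspace_D] f]
  by (simp add: trans_plus_def trans_minus_def)

lemma parts_U_ext_dom: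
  assumes g: "g \<in> G" and V: "V \<in> contractions D A" and x: "x \<in> D" and f: "f \<in> Np"
  shows "U g (x + (f - V f)) \<in> adj_dom D A"
    "plus_part (U g (x + (f - V f))) = trans_plus g V f"
    "minus_part (U g (x + (f - V f))) = - trans_minus g V f"
proof -
  have eq: "U g (x + (f - V f)) = U g x + U g (f - V f)" by (rule U_add[OF g])
  have dom: "U g x \<in> adj_dom D A" "U g (f - V f) \<in> adj_dom D A"
    using D_subset_adj_dom[OF U_in_D[OF g x]] U_in_adj_dom[OF g diff_contraction_in_adj_dom[OF V f]] by auto
  show "U g (x + (f - V f)) \<in> adj_dom D A" unfolding eq by (rule adj_dom_add[OF dom])
  show "plus_part (U g (x + (f - V f))) = trans_plus g V f"
    "minus_part (U g (x + (f - V f))) = - trans_minus g V f"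
    unfolding eq parts_add[OF dom] trans_plus_def trans_minus_def using parts_D_eq_zero[OF U_in_D[OF g x]] by simp_all
qed

lemma U_ext_dom_subset:
  assumes g: "g \<in> G" and V: "V \<in> contractions D A"
  shows "\<exists>W\<in>contractions D A. U g ` ext_dom D A V \<subseteq> ext_dom D A W"
proof -
  obtain W where W: "W \<in> contractions D A" "\<And>f. f \<in> Np \<Longrightarrow> W (trans_plus g V f) = trans_minus g V f"
    using contraction_extension[OF clinear_trans(1)[OF g V] trans_plus_in clinear_trans(2)[OF g V]
        trans_minus_in norm_trans_minus_le[OF g V]] by blast
  have "h \<in> ext_dom D A W" if h: "h \<in> U g ` ext_dom D A V" for h
  proof -
    obtain k where "h = U g k" "k \<in> ext_dom D A V" using h by blast
    then obtain x f where xf: "h = U g (x + (f - V f))" "x \<in> D" "f \<in> Np"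
      unfolding ext_dom_iff by blast
    obtain x' where x': "x' \<in> D" "h = x' + plus_part h + minus_part h"
      using adj_dom_decomposition parts_U_ext_dom(1)[OF g V xf(2,3)] xf(1) by blast
    then have "h = x' + (trans_plus g V f - W (trans_plus g V f))"
      using parts_U_ext_dom(2,3)[OF g V xf(2,3)] xf(1) W(2)[OF xf(3)] by simp
    then show ?thesis unfolding ext_dom_iff using x'(1) trans_plus_in by blast
  qed
  then show ?thesis using W(1) by blast
qed

lemma U_ext_dom_eq:
  assumes g: "g \<in> G" and V: "V \<in> contractions D A"
  shows "\<exists>W\<in>contractions D A. U g ` ext_dom D A V = ext_dom D A W"
proof -
  obtain W where W: "W \<in> contractions D A" "U g ` ext_dom D A V \<subseteq> ext_dom D A W"
    using U_ext_dom_subset[OF g V] by blast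
  obtain V' where V': "V' \<in> contractions D A" "U (ginv g) ` ext_dom D A W \<subseteq> ext_dom D A V'"
    using U_ext_dom_subset[OF ginv_in[OF g] W(1)] by blast
  have cancel: "U (ginv g) ` U g ` S = S" "U g ` U (ginv g) ` S = S" for S
    using U_ginv_U[OF g] U_U_ginv[OF g] by (simp_all add: image_image)
  have "ext_dom D A V \<subseteq> U (ginv g) ` ext_dom D A W"
    using image_mono[OF W(2), of "U (ginv g)"] cancel(1) by simp
  then have "ext_dom D A V \<subseteq> ext_dom D A V'" using V'(2) by blast
  then have "V = V'" by (rule ext_dom_subset_imp_eq[OF V V'(1)])
  then have "ext_dom D A W \<subseteq> U g ` ext_dom D A V"
    using image_mono[OF V'(2), of "U g"] cancel(2) by simp
  then show ?thesis using W by blast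
qed

lemma Gamma_characterization:
  assumes g: "g \<in> G" and V: "V \<in> contractions D A"
  shows "Gamma U D A g V \<in> contractions D A" "U g ` ext_dom D A V = ext_dom D A (Gamma U D A g V)"
proof -
  obtain W where W: "W \<in> contractions D A" "U g ` ext_dom D A V = ext_dom D A W"
    using U_ext_dom_eq[OF g V] by blast
  have "Gamma U D A g V = W" unfolding Gamma_def
  proof (rule the_equality)
    fix W' assume "W' \<in> contractions D A \<and> U g ` ext_dom D A V = ext_dom D A W'"
    then show "W' = W" using ext_dom_subset_imp_eq[OF W(1), of W'] W(2) by simp
  qed (use W in simp)
  then show "Gamma U D A g V \<in> contractions D A" "U g ` ext_dom D A V = ext_dom D A (Gamma U D A g V)"
    using W by simp_all
qed

lemma Gamma_trans_plus:
  assumes g: "g \<in> G" and V: "V \<in> contractions D A" and f: "f \<in> Np"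
  shows "Gamma U D A g V (trans_plus g V f) = trans_minus g V f"
proof -
  define W where "W = Gamma U D A g V"
  have W: "W \<in> contractions D A" "U g ` ext_dom D A V = ext_dom D A W"
    unfolding W_def using Gamma_characterization[OF g V] by auto
  have "0 + (f - V f) \<in> ext_dom D A V" unfolding ext_dom_iff using f csubspace_zero[OF csubspace_D] by blast
  then have "U g (0 + (f - V f)) \<in> ext_dom D A W" using W(2) by blast
  then obtain x q where xq: "U g (0 + (f - V f)) = x + (q - W q)" "x \<in> D" "q \<in> Np"
    unfolding ext_dom_iff by blast
  have "q = trans_plus g V f" "- W q = - trans_minus g V f"
    using parts_ext_dom(2,3)[OF W(1) xq(2,3)] parts_U_ext_dom(2,3)[OF g V csubspace_zero[OF csubspace_D] f]
    unfolding xq(1) by simp_all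
  then show ?thesis unfolding W_def by simp
qed

lemma trans_plus_surj:
  assumes g: "g \<in> G" and V: "V \<in> contractions D A" and q: "q \<in> Np"
  shows "\<exists>f\<in>Np. trans_plus g V f = q"
proof -
  define W where "W = Gamma U D A g V"
  have W: "W \<in> contractions D A" "U g ` ext_dom D A V = ext_dom D A W"
    unfolding W_def using Gamma_characterization[OF g V] by auto
  have "0 + (q - W q) \<in> ext_dom D A W" unfolding ext_dom_iff using q csubspace_zero[OF csubspace_D] by blast
  then obtain k where "0 + (q - W q) = U g k" "k \<in> ext_dom D A V" unfolding W(2)[symmetric] by blast
  then obtain x f where xf: "0 + (q - W q) = U g (x + (f - V f))" "x \<in> D" "f \<in> Np"
    unfolding ext_dom_iff by blast
  have "plus_part (0 + (q - W q)) = q"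
    by (rule parts_ext_dom(2)[OF W(1) csubspace_zero[OF csubspace_D] q])
  then show ?thesis using parts_U_ext_dom(2)[OF g V xf(2,3)] xf by auto
qed

end

section \<open>Quantitative estimates\<close>

definition coef1 :: "complex \<Rightarrow> real \<times> real \<Rightarrow> complex" where
  "coef1 s g = (\<i> - complex_of_real (snd g)) / complex_of_real (fst g) + s * \<i>"

definition coef2 :: "complex \<Rightarrow> real \<times> real \<Rightarrow> complex" where
  "coef2 s g = (\<i> + complex_of_real (snd g)) / complex_of_real (fst g) - s * \<i>"

lemma coef_identity:
  fixes x y :: "'a::chilbert"
  assumes "fst g \<noteq> 0"
  shows "(1 / fst g) *\<^sub>R ((\<i> *\<^sub>C x + \<i> *\<^sub>C y) - snd g *\<^sub>R (x - y)) + (s * \<i>) *\<^sub>C (x - y)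
    = coef1 s g *\<^sub>C x + coef2 s g *\<^sub>C y"
  using assms
  by (simp add: coef1_def coef2_def hs_scaleC_of_real[symmetric] hs_scaleC_add_left hs_scaleC_diff_left
      hs_scaleC_add_right hs_scaleC_diff_right divide_inverse algebra_simps)

context invariant_symmetric_operator
begin

lemma adj_shift_U_diff_contraction:
  assumes g: "g \<in> G" and V: "V \<in> contractions D A" and f: "f \<in> Np"
  shows "adj D A (U g (f - V f)) + (s * \<i>) *\<^sub>C U g (f - V f)
    = U g (coef1 s g *\<^sub>C f + coef2 s g *\<^sub>C V f)"
proof -
  have "adj D A (U g (f - V f)) = (1 / fst g) *\<^sub>R U g ((\<i> *\<^sub>C f + \<i> *\<^sub>C V f) - snd g *\<^sub>R (f - V f))"
    by (rule adj_eqI[OF adj_pair_U[OF g adj_pair_diff_contraction[OF V f]]])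
  then show ?thesis
    using coef_identity[of g f "V f" s] fst_pos[OF g]
    by (simp add: U_scaleR[OF g, symmetric] U_scaleC[OF g, symmetric] U_add[OF g, symmetric])
qed

lemma trans_plus_eq:
  "g \<in> G \<Longrightarrow> V \<in> contractions D A \<Longrightarrow> f \<in> Np \<Longrightarrow>
    trans_plus g V f = (- \<i> / 2) *\<^sub>C Pplus (U g (coef1 1 g *\<^sub>C f + coef2 1 g *\<^sub>C V f))"
  using adj_shift_U_diff_contraction[of g V f 1] by (simp add: trans_plus_def plus_part_def)

lemma trans_minus_eq:
  "g \<in> G \<Longrightarrow> V \<in> contractions D A \<Longrightarrow> f \<in> Np \<Longrightarrow>
    trans_minus g V f = (- \<i> / 2) *\<^sub>C Pminus (U g (coef1 (-1) g *\<^sub>C f + coef2 (-1) g *\<^sub>C V f))"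
  using adj_shift_U_diff_contraction[of g V f "-1"]
  by (simp add: trans_minus_def minus_part_def hs_scaleC_minus_left)

definition trans_bound :: "complex \<Rightarrow> real \<times> real \<Rightarrow> real" where
  "trans_bound s g = (cmod (coef1 s g) + cmod (coef2 s g)) / 2"

lemma norm_trans_le:
  assumes g: "g \<in> G" and V: "V \<in> contractions D A" and f: "f \<in> Np"
  shows "norm (trans_plus g V f) \<le> trans_bound 1 g * norm f"
    "norm (trans_minus g V f) \<le> trans_bound (-1) g * norm f"
proof -
  have half: "norm ((- \<i> / 2) *\<^sub>C y) = norm y / 2" for y :: 'a
    by (simp add: norm_hs_scaleC norm_divide)
  have "norm (U g (coef1 s g *\<^sub>C f + coef2 s g *\<^sub>C V f)) / 2 \<le> trans_bound s g * norm f" for s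
    using norm_lincomb_le[OF contractionsD(3)[OF V f]] by (simp add: norm_U[OF g] trans_bound_def)
  then show "norm (trans_plus g V f) \<le> trans_bound 1 g * norm f"
    "norm (trans_minus g V f) \<le> trans_bound (-1) g * norm f"
    unfolding trans_plus_eq[OF g V f] trans_minus_eq[OF g V f] half
    by (meson divide_right_mono norm_Pplus_le norm_Pminus_le order_trans zero_le_numeral)+
qed

lemma U_diff_contraction_decomposition:
  assumes g: "g \<in> G" and V: "V \<in> contractions D A" and f: "f \<in> Np"
  shows "\<exists>x\<in>D. U g (f - V f) = x + (trans_plus g V f - Gamma U D A g V (trans_plus g V f))"
proof -
  have h: "U g (0 + (f - V f)) \<in> adj_dom D A" by (rule parts_U_ext_dom(1)[OF g V csubspace_zero[OF csubspace_D] f])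
  then obtain x where "x \<in> D" "U g (f - V f) = x + plus_part (U g (f - V f)) + minus_part (U g (f - V f))"
    using adj_dom_decomposition by auto
  then show ?thesis
    using parts_U_ext_dom(2,3)[OF g V csubspace_zero[OF csubspace_D] f] Gamma_trans_plus[OF g V f] by auto
qed

lemma norm_le_trans_plus:
  assumes g: "g \<in> G" and V: "V \<in> contractions D A" and f: "f \<in> Np"
  shows "norm f \<le> trans_bound 1 (ginv g) * norm (trans_plus g V f)"
proof -
  define W q where "W = Gamma U D A g V" and "q = trans_plus g V f"
  have W: "W \<in> contractions D A" unfolding W_def using Gamma_characterization[OF g V] by auto
  obtain x where x: "x \<in> D" "U g (f - V f) = x + (q - W q)"
    using U_diff_contraction_decomposition[OF g V f] unfolding W_def q_def by blast
  have "f - V f = U (ginv g) (x + (q - W q))" using x(2) U_ginv_U[OF g, of "f - V f"] by simp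
  then have "f = trans_plus (ginv g) W q"
    using parts_U_ext_dom(2)[OF ginv_in[OF g] W x(1) trans_plus_in]
      parts_ext_dom(2)[OF V csubspace_zero[OF csubspace_D] f] unfolding q_def by simp
  then show ?thesis using norm_trans_le(1)[OF ginv_in[OF g] W trans_plus_in[of g V f]] unfolding q_def by metis
qed

definition deviation :: "real \<times> real \<Rightarrow> real \<times> real \<Rightarrow> real" where
  "deviation g0 g = (\<Sum>e\<in>Eplus. norm (U g e - U g0 e)) + (\<Sum>e\<in>Eminus. norm (U g e - U g0 e))"

lemma norm_U_diff_le_deviation:
  assumes g: "g \<in> G" and g0: "g0 \<in> G" and v: "v \<in> Np \<or> v \<in> Nm"
  shows "norm (U g v - U g0 v) \<le> deviation g0 g * norm v"
proof -
  have bound: "norm (U g v - U g0 v) \<le> (\<Sum>e\<in>E. norm (U g e - U g0 e)) * norm v"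
    if "finite E" "orthonormal E" "v \<in> cspan E" for E
    by (rule norm_diff_le_on_cspan[OF clinear_U[OF g] clinear_U[OF g0] that])
  have sum_le: "(\<Sum>e\<in>E. norm (U g e - U g0 e)) * norm v \<le> deviation g0 g * norm v"
    if "E = Eplus \<or> E = Eminus" for E
    using that by (intro mult_right_mono) (auto simp: deviation_def sum_nonneg)
  show ?thesis
  proof (cases "v \<in> Np")
    case True
    then show ?thesis using bound[OF Eplus(1,2)] Eplus(3) sum_le[of Eplus] by fastforce
  next
    case False
    then show ?thesis using v bound[OF Eminus(1,2)] Eminus(3) sum_le[of Eminus] by fastforce
  qed
qed

lemma deviation_nonneg: "deviation g0 g \<ge> 0"
  by (simp add: deviation_def sum_nonneg add_nonneg_nonneg)

definition trans_error :: "complex \<Rightarrow> real \<times> real \<Rightarrow> real \<times> real \<Rightarrow> real \<Rightarrow> real" where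
  "trans_error s g0 g d = (cmod (coef1 s g) + cmod (coef2 s g)) * deviation g0 g
     + cmod (coef1 s g - coef1 s g0) + cmod (coef2 s g - coef2 s g0) + cmod (coef2 s g0) * d"

lemma norm_U_lincomb_diff_le:
  assumes g: "g \<in> G" and g0: "g0 \<in> G" and V: "V \<in> contractions D A" and V0: "V0 \<in> contractions D A"
    and f: "f \<in> Np" and d: "norm (V f - V0 f) \<le> d * norm f"
  shows "norm (U g (coef1 s g *\<^sub>C f + coef2 s g *\<^sub>C V f) - U g0 (coef1 s g0 *\<^sub>C f + coef2 s g0 *\<^sub>C V0 f))
    \<le> trans_error s g0 g d * norm f"
proof -
  define k1 k2 k1' k2' where "k1 = coef1 s g" and "k2 = coef2 s g" and "k1' = coef1 s g0" and "k2' = coef2 s g0"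
  have Vf: "V f \<in> Nm" "norm (V f) \<le> norm f" using contractionsD(2,3)[OF V f] by auto
  have "U g (k1 *\<^sub>C f + k2 *\<^sub>C V f) - U g0 (k1' *\<^sub>C f + k2' *\<^sub>C V0 f)
    = k1 *\<^sub>C (U g f - U g0 f) + k2 *\<^sub>C (U g (V f) - U g0 (V f))
      + ((k1 - k1') *\<^sub>C U g0 f + (k2 - k2') *\<^sub>C U g0 (V f)) + k2' *\<^sub>C U g0 (V f - V0 f)"
    by (simp add: U_add[OF g] U_add[OF g0] U_scaleC[OF g] U_scaleC[OF g0] U_diff[OF g0]
        hs_scaleC_diff_right hs_scaleC_diff_left algebra_simps)
  also have "norm \<dots> \<le> cmod k1 * (deviation g0 g * norm f) + cmod k2 * (deviation g0 g * norm f)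
      + (cmod (k1 - k1') + cmod (k2 - k2')) * norm f + cmod k2' * (d * norm f)"
  proof -
    have "norm (U g f - U g0 f) \<le> deviation g0 g * norm f"
      "norm (U g (V f) - U g0 (V f)) \<le> deviation g0 g * norm f"
      using norm_U_diff_le_deviation[OF g g0, of f] norm_U_diff_le_deviation[OF g g0, of "V f"] f Vf
        mult_left_mono[OF Vf(2), of "deviation g0 g"] deviation_nonneg by auto
    then have "norm (k1 *\<^sub>C (U g f - U g0 f)) \<le> cmod k1 * (deviation g0 g * norm f)"
      "norm (k2 *\<^sub>C (U g (V f) - U g0 (V f))) \<le> cmod k2 * (deviation g0 g * norm f)"
      by (simp_all add: norm_hs_scaleC mult_left_mono)
    moreover have "norm ((k1 - k1') *\<^sub>C U g0 f + (k2 - k2') *\<^sub>C U g0 (V f))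
        \<le> (cmod (k1 - k1') + cmod (k2 - k2')) * norm f"
      using norm_lincomb_le[of "U g0 (V f)" "U g0 f"] Vf(2) by (simp add: norm_U[OF g0])
    moreover have "norm (k2' *\<^sub>C U g0 (V f - V0 f)) \<le> cmod k2' * (d * norm f)"
      using d by (simp add: norm_hs_scaleC norm_U[OF g0] mult_left_mono)
    ultimately show ?thesis
      by (smt (verit) norm_triangle_ineq)
  qed
  also have "\<dots> = trans_error s g0 g d * norm f"
    by (simp add: trans_error_def k1_def k2_def k1'_def k2'_def algebra_simps)
  finally show ?thesis unfolding k1_def k2_def k1'_def k2'_def .
qed

lemma trans_error_nonneg: "d \<ge> 0 \<Longrightarrow> trans_error s g0 g d \<ge> 0"
  by (simp add: trans_error_def deviation_nonneg)

lemma norm_trans_diff_le: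
  assumes g: "g \<in> G" and g0: "g0 \<in> G" and V: "V \<in> contractions D A" and V0: "V0 \<in> contractions D A"
    and f: "f \<in> Np" and d: "norm (V f - V0 f) \<le> d * norm f"
  shows "norm (trans_plus g V f - trans_plus g0 V0 f) \<le> trans_error 1 g0 g d * norm f"
    "norm (trans_minus g V f - trans_minus g0 V0 f) \<le> trans_error (-1) g0 g d * norm f"
proof -
  have half: "norm ((- \<i> / 2) *\<^sub>C y) \<le> norm y" for y :: 'a
    by (simp add: norm_hs_scaleC norm_divide)
  show "norm (trans_plus g V f - trans_plus g0 V0 f) \<le> trans_error 1 g0 g d * norm f"
    unfolding trans_plus_eq[OF g V f] trans_plus_eq[OF g0 V0 f] hs_scaleC_diff_right[symmetric]
      proj_diff[symmetric]
    by (rule order_trans[OF half order_trans[OF norm_Pplus_le norm_U_lincomb_diff_le[OF g g0 V V0 f d]]])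
  show "norm (trans_minus g V f - trans_minus g0 V0 f) \<le> trans_error (-1) g0 g d * norm f"
    unfolding trans_minus_eq[OF g V f] trans_minus_eq[OF g0 V0 f] hs_scaleC_diff_right[symmetric]
      proj_diff[symmetric]
    by (rule order_trans[OF half order_trans[OF norm_Pminus_le norm_U_lincomb_diff_le[OF g g0 V V0 f d]]])
qed

definition Gamma_bound :: "real \<times> real \<Rightarrow> real \<times> real \<Rightarrow> real \<Rightarrow> real" where
  "Gamma_bound g0 g d = (trans_error 1 g0 g d + trans_error (-1) g0 g d) * trans_bound 1 (ginv g)
     * (1 + trans_bound (-1) g0 * trans_bound 1 (ginv g0))"

text \<open>Write q = L f = L0 f0 with L = \<open>trans_plus g V\<close>, L0 = \<open>trans_plus g0 V0\<close>, M, M0 likewise. Then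
  Gamma_g(V) q - Gamma_g0(V0) q = (M f - M0 f) + M0 (f - f0), and
  |f - f0| \<le> K |L0 (f - f0)| = K |L0 f - L f| by the lower bound on L0.\<close>

lemma norm_Gamma_diff_le:
  assumes g: "g \<in> G" and g0: "g0 \<in> G" and V: "V \<in> contractions D A" and V0: "V0 \<in> contractions D A"
    and q: "q \<in> Np" "norm q \<le> 1"
  shows "norm (Gamma U D A g V q - Gamma U D A g0 V0 q) \<le> Gamma_bound g0 g (opdist D A V V0)"
proof -
  define d e K K0 C0 where "d = opdist D A V V0"
    and "e = trans_error 1 g0 g d + trans_error (-1) g0 g d"
    and "K = trans_bound 1 (ginv g)" and "K0 = trans_bound 1 (ginv g0)" and "C0 = trans_bound (-1) g0"
  have d: "d \<ge> 0" unfolding d_def by (rule opdist_nonneg[OF V V0])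
  have nonneg: "e \<ge> 0" "K0 \<ge> 0" "C0 \<ge> 0"
    using d by (simp_all add: e_def K0_def C0_def trans_bound_def trans_error_nonneg add_nonneg_nonneg)
  obtain f where f: "f \<in> Np" "trans_plus g V f = q" using trans_plus_surj[OF g V q(1)] by blast
  obtain f0 where f0: "f0 \<in> Np" "trans_plus g0 V0 f0 = q" using trans_plus_surj[OF g0 V0 q(1)] by blast
  have ff0: "f - f0 \<in> Np" by (rule csubspace_diff[OF csubspace_Nplus f(1) f0(1)])
  have dV: "norm (V f - V0 f) \<le> d * norm f" unfolding d_def by (rule norm_diff_le_opdist[OF V V0 f(1)])
  have err: "norm (trans_plus g V f - trans_plus g0 V0 f) \<le> e * norm f"
    "norm (trans_minus g V f - trans_minus g0 V0 f) \<le> e * norm f"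
    using norm_trans_diff_le[OF g g0 V V0 f(1) dV] trans_error_nonneg[OF d] norm_ge_zero
    unfolding e_def by (smt (verit) mult_right_mono)+
  have nf: "norm f \<le> K"
    using norm_le_trans_plus[OF g V f(1)] q(2) f(2) mult_left_le[of "norm q" "trans_bound 1 (ginv g)"]
    unfolding K_def trans_bound_def by (simp add: order_trans)
  have "norm (f - f0) \<le> K0 * norm (trans_plus g0 V0 (f - f0))"
    unfolding K0_def by (rule norm_le_trans_plus[OF g0 V0 ff0])
  also have "trans_plus g0 V0 (f - f0) = trans_plus g0 V0 f - trans_plus g V f"
    using clinear_on_diff[OF csubspace_Nplus clinear_trans(1)[OF g0 V0] f(1) f0(1)] f0(2) f(2) by simp
  finally have df: "norm (f - f0) \<le> K0 * (e * norm f)"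
    using err(1) nonneg(2) by (smt (verit) mult_left_mono norm_minus_commute)
  have "Gamma U D A g V q - Gamma U D A g0 V0 q
      = (trans_minus g V f - trans_minus g0 V0 f) + trans_minus g0 V0 (f - f0)"
    using Gamma_trans_plus[OF g V f(1)] Gamma_trans_plus[OF g0 V0 f0(1)] f(2) f0(2)
      clinear_on_diff[OF csubspace_Nplus clinear_trans(2)[OF g0 V0] f(1) f0(1)] by simp
  also have "norm \<dots> \<le> e * norm f + C0 * (K0 * (e * norm f))"
    using norm_triangle_ineq err(2) norm_trans_le(2)[OF g0 V0 ff0] df nonneg(3) unfolding C0_def
    by (smt (verit) mult_left_mono)
  also have "\<dots> = e * norm f * (1 + C0 * K0)" by (simp add: algebra_simps)
  also have "\<dots> \<le> e * K * (1 + C0 * K0)"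
    using nf nonneg by (intro mult_right_mono mult_left_mono) simp_all
  finally show ?thesis unfolding Gamma_bound_def e_def K_def K0_def C0_def d_def .
qed

lemma continuous_on_Gamma_bound:
  "continuous_on (G \<times> UNIV) (\<lambda>z. Gamma_bound g0 (fst z) (snd z))"
proof -
  have U: "continuous_on (G \<times> UNIV) (\<lambda>z. U (fst z) e)" for e :: 'a
    using rep unfolding strongly_cont_unitary_rep_def
    by (intro continuous_on_compose2[of G "\<lambda>g. U g e" _ fst] continuous_on_fst) auto
  have "\<forall>z\<in>G \<times> UNIV. fst (fst z) \<noteq> 0" using fst_pos by fastforce
  then show ?thesis
    unfolding Gamma_bound_def trans_error_def trans_bound_def deviation_def coef1_def coef2_def ginv_def
    by (intro continuous_intros U) auto
qed

lemma Gamma_bound_zero: "Gamma_bound g0 g0 0 = 0"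
  by (simp add: Gamma_bound_def trans_error_def deviation_def)

lemma Gamma_continuous:
  assumes g0: "g0 \<in> G" and V0: "V0 \<in> contractions D A" and e: "\<epsilon> > 0"
  shows "\<exists>\<delta>>0. \<forall>g\<in>G. \<forall>V\<in>contractions D A. dist g g0 < \<delta> \<and> opdist D A V V0 < \<delta> \<longrightarrow>
            opdist D A (Gamma U D A g V) (Gamma U D A g0 V0) < \<epsilon>"
proof -
  have "(g0, 0) \<in> G \<times> (UNIV :: real set)" using g0 by simp
  then obtain \<delta> where \<delta>: "\<delta> > 0"
    "\<forall>g\<in>G. \<forall>d. dist (g, d) (g0, 0) < \<delta> \<longrightarrow> \<bar>Gamma_bound g0 g d\<bar> < \<epsilon>"
    using continuous_on_iff[THEN iffD1, OF continuous_on_Gamma_bound, rule_format, of "(g0, 0)" \<epsilon> g0] e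
    by (auto simp: Gamma_bound_zero dist_real_def)
  show ?thesis
  proof (intro exI[of _ "\<delta> / 2"] conjI ballI impI)
    fix g V assume g: "g \<in> G" and V: "V \<in> contractions D A"
      and close: "dist g g0 < \<delta> / 2 \<and> opdist D A V V0 < \<delta> / 2"
    have "dist (g, opdist D A V V0) (g0, 0) < \<delta>"
      using close opdist_nonneg[OF V V0] unfolding dist_Pair_Pair
      by (intro sqrt_sum_squares_half_less) (auto simp: dist_real_def)
    then have "Gamma_bound g0 g (opdist D A V V0) < \<epsilon>" using \<delta>(2) g by fastforce
    moreover have "opdist D A (Gamma U D A g V) (Gamma U D A g0 V0) \<le> Gamma_bound g0 g (opdist D A V V0)"
      using Gamma_characterization(1)[OF g V] Gamma_characterization(1)[OF g0 V0] norm_Gamma_diff_le[OF g g0 V V0] by (rule opdist_le)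
    ultimately show "opdist D A (Gamma U D A g V) (Gamma U D A g0 V0) < \<epsilon>" by simp
  qed (use \<delta>(1) in simp)
qed

end

theorem corollary4p2:
  fixes G :: "(real \<times> real) set"
    and U :: "real \<times> real \<Rightarrow> 'a::chilbert \<Rightarrow> 'a"
    and D :: "'a set" and A :: "'a \<Rightarrow> 'a"
  assumes "aff_subgroup G"
    and "strongly_cont_unitary_rep G U"
    and "lin_op D A" and "densely_defined D" and "closed_op D A" and "symmetric_op D A"
    and "G_invariant G U D A"
    and "finite_dim (Nplus D A)" and "finite_dim (Nminus D A)"
  shows "(\<forall>g0\<in>G. \<forall>V0\<in>contractions D A. \<forall>\<epsilon>>0. \<exists>\<delta>>0. \<forall>g\<in>G. \<forall>V\<in>contractions D A.
            dist g g0 < \<delta> \<and> opdist D A V V0 < \<delta> \<longrightarrow>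
            opdist D A (Gamma U D A g V) (Gamma U D A g0 V0) < \<epsilon>)
       \<and> (\<forall>\<gamma> :: real \<Rightarrow> real \<times> real.
            continuous_on UNIV \<gamma> \<and> (\<forall>s t. \<gamma> (s + t) = gmult (\<gamma> s) (\<gamma> t)) \<and> range \<gamma> = G \<longrightarrow>
            (\<forall>V\<in>contractions D A. \<forall>t0. \<forall>\<epsilon>>0. \<exists>\<delta>>0. \<forall>t. \<bar>t - t0\<bar> < \<delta> \<longrightarrow>
               opdist D A (Gamma U D A (\<gamma> t) V) (Gamma U D A (\<gamma> t0) V) < \<epsilon>))"
proof -
  interpret invariant_symmetric_operator D A G U
    by unfold_locales (use assms in auto)
  have trajectory: "\<exists>\<delta>>0. \<forall>t. \<bar>t - t0\<bar> < \<delta> \<longrightarrow>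
      opdist D A (Gamma U D A (\<gamma> t) V) (Gamma U D A (\<gamma> t0) V) < \<epsilon>"
    if \<gamma>: "continuous_on UNIV \<gamma>" "range \<gamma> = G" and V: "V \<in> contractions D A" and e: "\<epsilon> > 0"
    for \<gamma> :: "real \<Rightarrow> real \<times> real" and V t0 \<epsilon>
  proof -
    obtain \<delta> where \<delta>: "\<delta> > 0" "\<forall>g\<in>G. \<forall>V'\<in>contractions D A. dist g (\<gamma> t0) < \<delta> \<and> opdist D A V' V < \<delta> \<longrightarrow>
        opdist D A (Gamma U D A g V') (Gamma U D A (\<gamma> t0) V) < \<epsilon>"
      using Gamma_continuous[OF _ V e, of "\<gamma> t0"] \<gamma>(2) by blast
    obtain \<delta>' where "\<delta>' > 0" "\<forall>t. dist t t0 < \<delta>' \<longrightarrow> dist (\<gamma> t) (\<gamma> t0) < \<delta>"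
      using \<gamma>(1) \<delta>(1) unfolding continuous_on_iff by blast
    then show ?thesis
      using \<delta> \<gamma>(2) V opdist_self[OF V] by (intro exI[of _ \<delta>']) (auto simp: dist_real_def)
  qed
  show ?thesis using Gamma_continuous trajectory by blast
qed

end
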